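(* For each $n\in\mathbb{N}$ let $A_n\subseteq\mathcal{R}$ be L-measurable, and suppose $\lim_{N\to\infty}M\big(\bigcup_{n=1}^N A_n\big)$ exists in $\mathcal{R}$. Then $\bigcup_{n=1}^\infty A_n$ is L-measurable.
   Context: $\mathcal{R}$ denotes the Levi-Civita field: functions $x:\mathbb{Q}\to\mathbb{R}$ with left-finite support, with componentwise addition and formal power series multiplication, ordered by $x>0$ iff $x\ne0$ and $x[\min\operatorname{supp}x]>0$; it is a non-Archimedean ordered field extension of $\mathbb{R}$, Cauchy complete in the order topology, in which all limits and series are taken (a series $\sum a_n$ converges iff $a_n\to0$). An interval is a set $[a,b],[a,b),(a,b]$ or $(a,b)$ with $a<b$ in $\mathcal{R}$, of length $l=b-a$. A cover of $A\subseteq\mathcal{R}$ is a sequence of intervals $(S_n)_{n\ge1}$ with $A\subseteq\bigcup_n S_n$ and $\sum_n l(S_n)$ convergent in $\mathcal{R}$. $A$ is called outer measurable if the infimum $\inf\{\sum_n l(S_n): (S_n)\text{ a cover of }A\}$ exists in $\mathcal{R}$; this infimum is then called the outer measure $M_u(A)$. An outer measurable set $A\subseteq\mathcal{R}$ is L-measurable if for every outer measurable $B\subseteq\mathcal{R}$ both $A\cap B$ and $A^c\cap B$ (where $A^c=\mathcal{R}\setminus A$) are outer measurable and $M_u(B)=M_u(A\cap B)+M_u(A^c\cap B)$; then its L-measure is $M(A):=M_u(A)$. Finite unions of L-measurable sets are L-measurable, so $M(\bigcup_{n=1}^N A_n)$ is defined. *)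

theory Defs
  imports Complex_Main
begin

text \<open>Elements: functions rat => real with left-finite support.
  Only the additive structure and the order enter the statement (lengths,
  sums of series, infima, limits), so multiplication is not needed.\<close>

typedef lc = "{x :: rat \<Rightarrow> real. \<forall>q. finite {r. r \<le> q \<and> x r \<noteq> 0}}"
  morphisms coeff Abs_lc
  by (rule exI[of _ "\<lambda>_. 0"]) auto

setup_lifting type_definition_lc

lemma lc_supp_combine:
  assumes hx: "\<forall>q. finite {r. r \<le> q \<and> x r \<noteq> 0}"
    and hy: "\<forall>q. finite {r. r \<le> q \<and> y r \<noteq> (0::real)}"
    and hf: "\<And>r. x r = 0 \<Longrightarrow> y r = 0 \<Longrightarrow> f r = 0"
  shows "\<forall>q. finite {r::rat. r \<le> q \<and> f r \<noteq> 0}"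
proof
  fix q
  have "{r. r \<le> q \<and> f r \<noteq> 0} \<subseteq> {r. r \<le> q \<and> x r \<noteq> 0} \<union> {r. r \<le> q \<and> y r \<noteq> 0}"
    using hf by auto
  then show "finite {r. r \<le> q \<and> f r \<noteq> 0}"
    using hx hy by (meson finite_Un finite_subset)
qed

instantiation lc :: ab_group_add
begin

lift_definition zero_lc :: lc is "\<lambda>_. 0" by auto

lift_definition plus_lc :: "lc \<Rightarrow> lc \<Rightarrow> lc" is "\<lambda>x y q. x q + y q"
  subgoal for x y q by (rule lc_supp_combine[of x y "\<lambda>r. x r + y r", rule_format]) auto
  done

lift_definition uminus_lc :: "lc \<Rightarrow> lc" is "\<lambda>x q. - x q" by simp

lift_definition minus_lc :: "lc \<Rightarrow> lc \<Rightarrow> lc" is "\<lambda>x y q. x q - y q"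
  subgoal for x y q by (rule lc_supp_combine[of x y "\<lambda>r. x r - y r", rule_format]) auto
  done

instance
  by standard (transfer; auto simp: algebra_simps)+

end

definition lc_pos :: "lc \<Rightarrow> bool" where
  "lc_pos x \<longleftrightarrow> x \<noteq> 0 \<and> coeff x (LEAST q. coeff x q \<noteq> 0) > 0"

definition lc_less :: "lc \<Rightarrow> lc \<Rightarrow> bool" where
  "lc_less x y \<longleftrightarrow> lc_pos (y - x)"

definition lc_le :: "lc \<Rightarrow> lc \<Rightarrow> bool" where
  "lc_le x y \<longleftrightarrow> x = y \<or> lc_less x y"

definition lc_tendsto :: "(nat \<Rightarrow> lc) \<Rightarrow> lc \<Rightarrow> bool" where
  "lc_tendsto X L \<longleftrightarrow>
     (\<forall>e. lc_pos e \<longrightarrow> (\<exists>N. \<forall>n\<ge>N. lc_less (X n - L) e \<and> lc_less (L - X n) e))"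

definition lc_sums :: "(nat \<Rightarrow> lc) \<Rightarrow> lc \<Rightarrow> bool" where
  "lc_sums a s \<longleftrightarrow> lc_tendsto (\<lambda>N. \<Sum>n<N. a n) s"

definition lc_suminf :: "(nat \<Rightarrow> lc) \<Rightarrow> lc" where
  "lc_suminf a = (THE s. lc_sums a s)"

definition lc_interval_len :: "lc set \<Rightarrow> lc \<Rightarrow> bool" where
  "lc_interval_len I l \<longleftrightarrow> (\<exists>a b. lc_less a b \<and> l = b - a \<and>
     (I = {x. lc_le a x \<and> lc_le x b} \<or> I = {x. lc_le a x \<and> lc_less x b} \<or>
      I = {x. lc_less a x \<and> lc_le x b} \<or> I = {x. lc_less a x \<and> lc_less x b}))"

definition lc_is_interval :: "lc set \<Rightarrow> bool" where
  "lc_is_interval I \<longleftrightarrow> (\<exists>l. lc_interval_len I l)"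

definition lc_length :: "lc set \<Rightarrow> lc" where
  "lc_length I = (THE l. lc_interval_len I l)"

definition lc_cover :: "(nat \<Rightarrow> lc set) \<Rightarrow> lc set \<Rightarrow> bool" where
  "lc_cover S A \<longleftrightarrow> (\<forall>n. lc_is_interval (S n)) \<and> A \<subseteq> (\<Union>n. S n) \<and>
     (\<exists>s. lc_sums (\<lambda>n. lc_length (S n)) s)"

definition lc_is_inf :: "lc set \<Rightarrow> lc \<Rightarrow> bool" where
  "lc_is_inf T m \<longleftrightarrow> (\<forall>t\<in>T. lc_le m t) \<and> (\<forall>m'. (\<forall>t\<in>T. lc_le m' t) \<longrightarrow> lc_le m' m)"

definition cover_sums :: "lc set \<Rightarrow> lc set" where
  "cover_sums A = {lc_suminf (\<lambda>n. lc_length (S n)) | S. lc_cover S A}"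

definition outer_measurable :: "lc set \<Rightarrow> bool" where
  "outer_measurable A \<longleftrightarrow> (\<exists>m. lc_is_inf (cover_sums A) m)"

definition outer_measure :: "lc set \<Rightarrow> lc" where
  "outer_measure A = (THE m. lc_is_inf (cover_sums A) m)"

definition L_measurable :: "lc set \<Rightarrow> bool" where
  "L_measurable A \<longleftrightarrow> outer_measurable A \<and>
     (\<forall>B. outer_measurable B \<longrightarrow>
        outer_measurable (A \<inter> B) \<and> outer_measurable (- A \<inter> B) \<and>
        outer_measure B = outer_measure (A \<inter> B) + outer_measure (- A \<inter> B))"

definition L_measure :: "lc set \<Rightarrow> lc" where
  "L_measure A = outer_measure A"

end

theory Submission
  imports Defs "HOL-Analysis.Continuum_Not_Denumerable"
begin

text \<open>
  A sequence in the Levi-Civita field converges iff its differences eventually vanish up to every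
  exponent; in particular a series converges iff its terms tend to zero. The finite unions
  \<open>U\<^sub>N = A\<^sub>1 \<union> \<dots> \<union> A\<^sub>N\<close> are L-measurable, so the rings \<open>U\<^sub>N\<^sub>+\<^sub>1 - U\<^sub>N\<close> have measures
  \<open>M(U\<^sub>N\<^sub>+\<^sub>1) - M(U\<^sub>N)\<close>, a null sequence by hypothesis. Merging near-optimal covers of the rings
  beyond \<open>N\<close> covers \<open>\<Union>U - U\<^sub>N\<close> by intervals of arbitrarily small total length, hence
  \<open>M\<^sub>u(\<Union>U \<inter> B) = lim M\<^sub>u(U\<^sub>N \<inter> B)\<close> and \<open>M\<^sub>u(B - \<Union>U) = M\<^sub>u(B) - lim M\<^sub>u(U\<^sub>N \<inter> B)\<close> for every
  outer measurable \<open>B\<close>, which is the Caratheodory condition for \<open>\<Union>U\<close>.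

  The one point that is not bookkeeping is that the outer measure of an interval is its length.
  A cover of smaller total length has only finitely many intervals that are not infinitesimal
  relative to the defect; sweeping over those leaves a gap that is covered by the infinitesimal
  intervals alone although its own length is not infinitesimal. The points \<open>x + c d\<^sup>p\<close> of that
  gap (\<open>d\<close> the basic infinitesimal, \<open>c\<close> ranging over a real interval) would then inject an
  uncountable set into \<open>\<nat>\<close>.
\<close>

lemma coeff_add [simp]: "coeff (x + y) q = coeff x q + coeff y q"
  by transfer simp

lemma coeff_diff [simp]: "coeff (x - y) q = coeff x q - coeff y q"
  by transfer simp

lemma coeff_uminus [simp]: "coeff (- x) q = - coeff x q"
  by transfer simp

lemma coeff_zero [simp]: "coeff 0 q = 0"
  by transfer simp

lemma coeff_sum: "coeff (sum f A) q = (\<Sum>i\<in>A. coeff (f i) q)"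
  by (induction A rule: infinite_finite_induct) auto

lemma lc_eqI: "(\<And>q. coeff x q = coeff y q) \<Longrightarrow> x = y"
  by (metis coeff_inject ext)

lemma finite_nonzero_coeffs_le: "finite {r. r \<le> q \<and> coeff x r \<noteq> 0}"
  using coeff[of x] by auto

definition lead_exp :: "lc \<Rightarrow> rat" where
  "lead_exp x = (LEAST q. coeff x q \<noteq> 0)"

lemma lead_exp_eqI:
  assumes "coeff x p \<noteq> 0" and "\<And>r. r < p \<Longrightarrow> coeff x r = 0"
  shows "lead_exp x = p"
  unfolding lead_exp_def using assms by (intro Least_equality) (auto intro: leI)

lemma coeff_lead_exp:
  assumes "x \<noteq> 0"
  shows "coeff x (lead_exp x) \<noteq> 0" and "\<And>r. r < lead_exp x \<Longrightarrow> coeff x r = 0"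
proof -
  obtain q where q: "coeff x q \<noteq> 0"
    using assms lc_eqI[of x 0] by auto
  define F where "F = {r. r \<le> q \<and> coeff x r \<noteq> 0}"
  have "finite F" and "q \<in> F"
    using finite_nonzero_coeffs_le q unfolding F_def by auto
  then have "coeff x (Min F) \<noteq> 0"
    using Min_in[of F] unfolding F_def by blast
  moreover have "coeff x r = 0" if "r < Min F" for r
  proof (rule ccontr)
    assume "coeff x r \<noteq> 0"
    moreover have "r \<le> q" using that Min_le[OF \<open>finite F\<close> \<open>q \<in> F\<close>] by simp
    ultimately have "Min F \<le> r" using \<open>finite F\<close> unfolding F_def by (intro Min_le) auto
    with that show False by simp
  qed
  ultimately show "coeff x (lead_exp x) \<noteq> 0" and "\<And>r. r < lead_exp x \<Longrightarrow> coeff x r = 0"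
    using lead_exp_eqI[of x "Min F"] by auto
qed

lemma lc_pos_iff_leading: "lc_pos x \<longleftrightarrow> (\<exists>p. 0 < coeff x p \<and> (\<forall>r<p. coeff x r = 0))"
proof
  assume "lc_pos x"
  then show "\<exists>p. 0 < coeff x p \<and> (\<forall>r<p. coeff x r = 0)"
    using coeff_lead_exp unfolding lc_pos_def lead_exp_def[symmetric] by blast
next
  assume "\<exists>p. 0 < coeff x p \<and> (\<forall>r<p. coeff x r = 0)"
  then obtain p where "0 < coeff x p" "\<forall>r<p. coeff x r = 0" by blast
  moreover from this have "lead_exp x = p" by (intro lead_exp_eqI) auto
  ultimately show "lc_pos x"
    unfolding lc_pos_def lead_exp_def[symmetric] by auto
qed

lemma lc_pos_add: "lc_pos x \<Longrightarrow> lc_pos y \<Longrightarrow> lc_pos (x + y)"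
  unfolding lc_pos_iff_leading
proof (elim exE conjE)
  fix p q
  assume p: "0 < coeff x p" "\<forall>r<p. coeff x r = 0" and q: "0 < coeff y q" "\<forall>r<q. coeff y r = 0"
  show "\<exists>s. 0 < coeff (x + y) s \<and> (\<forall>r<s. coeff (x + y) r = 0)"
  proof (cases p q rule: linorder_cases)
    case less then show ?thesis using p q by (intro exI[of _ p]) auto
  next
    case equal then show ?thesis using p q by (intro exI[of _ p]) auto
  next
    case greater then show ?thesis using p q by (intro exI[of _ q]) auto
  qed
qed

lemma lc_pos_uminus: "lc_pos x \<Longrightarrow> \<not> lc_pos (- x)"
  unfolding lc_pos_iff_leading
proof (elim exE conjE, rule notI)
  fix p assume p: "0 < coeff x p" "\<forall>r<p. coeff x r = 0"
  assume "\<exists>q. 0 < coeff (- x) q \<and> (\<forall>r<q. coeff (- x) r = 0)"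
  then obtain q where q: "0 < coeff (- x) q" "\<forall>r<q. coeff (- x) r = 0" by blast
  show False
    using p q by (cases p q rule: linorder_cases) auto
qed

lemma lc_pos_or_uminus: "x \<noteq> 0 \<Longrightarrow> lc_pos x \<or> lc_pos (- x)"
  unfolding lc_pos_iff_leading
proof -
  assume "x \<noteq> 0"
  then have "coeff x (lead_exp x) \<noteq> 0" "\<forall>r<lead_exp x. coeff x r = 0"
    using coeff_lead_exp by auto
  then show "(\<exists>p. 0 < coeff x p \<and> (\<forall>r<p. coeff x r = 0)) \<or>
      (\<exists>p. 0 < coeff (- x) p \<and> (\<forall>r<p. coeff (- x) r = 0))"
    by (cases "0 < coeff x (lead_exp x)") (auto intro!: exI[of _ "lead_exp x"])
qed

instantiation lc :: linordered_ab_group_add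
begin

definition less_eq_lc :: "lc \<Rightarrow> lc \<Rightarrow> bool" where "less_eq_lc = lc_le"
definition less_lc :: "lc \<Rightarrow> lc \<Rightarrow> bool" where "less_lc = lc_less"

instance
proof
  have pos_diff_ne: "lc_pos (y - x) \<Longrightarrow> x \<noteq> y" for x y :: lc
    unfolding lc_pos_def by auto
  have pos_diff_swap: "lc_pos (y - x) \<Longrightarrow> \<not> lc_pos (x - y)" for x y :: lc
    using lc_pos_uminus[of "y - x"] by simp
  have pos_diff_trans: "lc_pos (y - x) \<Longrightarrow> lc_pos (z - y) \<Longrightarrow> lc_pos (z - x)" for x y z :: lc
    using lc_pos_add[of "y - x" "z - y"] by simp
  fix x y z :: lc
  show "x < y \<longleftrightarrow> x \<le> y \<and> \<not> y \<le> x"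
    unfolding less_eq_lc_def less_lc_def lc_le_def lc_less_def
    using pos_diff_ne[of x y] pos_diff_swap[of x y] by auto
  show "x \<le> x"
    unfolding less_eq_lc_def lc_le_def by simp
  show "x \<le> y \<Longrightarrow> y \<le> z \<Longrightarrow> x \<le> z"
    unfolding less_eq_lc_def lc_le_def lc_less_def using pos_diff_trans by blast
  show "x \<le> y \<Longrightarrow> y \<le> x \<Longrightarrow> x = y"
    unfolding less_eq_lc_def lc_le_def lc_less_def using pos_diff_swap[of x y] by auto
  show "x \<le> y \<Longrightarrow> z + x \<le> z + y"
    unfolding less_eq_lc_def lc_le_def lc_less_def by simp
  show "x \<le> y \<or> y \<le> x"
    unfolding less_eq_lc_def lc_le_def lc_less_def
    using lc_pos_or_uminus[of "y - x"] by auto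
qed

end

lemma lc_less_iff [simp]: "lc_less x y \<longleftrightarrow> x < y"
  unfolding less_lc_def ..

lemma lc_le_iff [simp]: "lc_le x y \<longleftrightarrow> x \<le> y"
  unfolding less_eq_lc_def ..

lemma lc_pos_iff [simp]: "lc_pos x \<longleftrightarrow> 0 < x"
  unfolding less_lc_def lc_less_def by simp

lemma lc_less_iff_leading: "x < y \<longleftrightarrow> (\<exists>p. 0 < coeff (y - x) p \<and> (\<forall>r<p. coeff (y - x) r = 0))"
  unfolding less_lc_def lc_less_def lc_pos_iff_leading ..

lemma coeff_lead_exp_pos: "0 < x \<Longrightarrow> 0 < coeff x (lead_exp x)"
  by (metis lc_pos_def lc_pos_iff lead_exp_def)

lift_definition lc_monom :: "real \<Rightarrow> rat \<Rightarrow> lc" is "\<lambda>c p r. if r = p then c else 0"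
  subgoal for c p q by (rule finite_subset[of _ "{p}"]) auto
  done

lemma coeff_lc_monom: "coeff (lc_monom c p) r = (if r = p then c else 0)"
  by transfer simp

lemma lc_monom_pos: "0 < c \<Longrightarrow> 0 < lc_monom c p"
  unfolding lc_less_iff_leading by (auto simp: coeff_lc_monom intro!: exI[of _ p])

instance lc :: dense_linorder
proof
  fix a b :: lc
  assume "a < b"
  define p where "p = lead_exp (b - a)"
  define c where "c = coeff (b - a) p"
  have "0 < c" and below_p: "\<And>r. r < p \<Longrightarrow> coeff (b - a) r = 0"
    using coeff_lead_exp_pos[of "b - a"] coeff_lead_exp(2)[of "b - a"] \<open>a < b\<close> unfolding p_def c_def by auto
  have "a < a + lc_monom (c / 2) p"
    using lc_monom_pos[of "c / 2" p] \<open>0 < c\<close> by simp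
  moreover have "a + lc_monom (c / 2) p < b"
    unfolding lc_less_iff_leading
    using \<open>0 < c\<close> below_p by (intro exI[of _ p]) (simp add: coeff_lc_monom c_def field_simps)
  ultimately show "\<exists>x>a. x < b" by blast
qed

lemma lc_le_of_forall_pos:
  fixes x y :: lc
  assumes "\<And>e. 0 < e \<Longrightarrow> x \<le> y + e"
  shows "x \<le> y"
proof (rule ccontr)
  assume "\<not> x \<le> y"
  then have "y < x" by simp
  then obtain z where "y < z" and "z < x"
    using dense by blast
  with assms[of "z - y"] show False by simp
qed

definition vanishes_upto :: "rat \<Rightarrow> lc \<Rightarrow> bool" where
  "vanishes_upto q x \<longleftrightarrow> (\<forall>r\<le>q. coeff x r = 0)"

lemma vanishes_upto_zero [simp]: "vanishes_upto q 0"
  unfolding vanishes_upto_def by simp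

lemma vanishes_upto_add: "vanishes_upto q x \<Longrightarrow> vanishes_upto q y \<Longrightarrow> vanishes_upto q (x + y)"
  unfolding vanishes_upto_def by simp

lemma vanishes_upto_diff: "vanishes_upto q x \<Longrightarrow> vanishes_upto q y \<Longrightarrow> vanishes_upto q (x - y)"
  unfolding vanishes_upto_def by simp

lemma vanishes_upto_uminus [simp]: "vanishes_upto q (- x) \<longleftrightarrow> vanishes_upto q x"
  unfolding vanishes_upto_def by simp

lemma vanishes_upto_sum: "(\<And>i. i \<in> A \<Longrightarrow> vanishes_upto q (f i)) \<Longrightarrow> vanishes_upto q (sum f A)"
  unfolding vanishes_upto_def by (simp add: coeff_sum)

lemma vanishes_upto_mono: "q' \<le> q \<Longrightarrow> vanishes_upto q x \<Longrightarrow> vanishes_upto q' x"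
  unfolding vanishes_upto_def by simp

lemma vanishes_upto_lc_monom: "q < p \<Longrightarrow> vanishes_upto q (lc_monom c p)"
  unfolding vanishes_upto_def coeff_lc_monom by auto

lemma not_vanishes_upto_lc_monom: "c \<noteq> 0 \<Longrightarrow> \<not> vanishes_upto p (lc_monom c p)"
  unfolding vanishes_upto_def coeff_lc_monom by auto

lemma vanishes_upto_lead_exp_less:
  assumes "0 < e" and "vanishes_upto (lead_exp e) x"
  shows "x < e"
  unfolding lc_less_iff_leading
proof (intro exI conjI allI impI)
  show "0 < coeff (e - x) (lead_exp e)"
    using assms coeff_lead_exp_pos[of e] unfolding vanishes_upto_def by simp
  show "coeff (e - x) r = 0" if "r < lead_exp e" for r
    using assms that coeff_lead_exp(2)[of e] unfolding vanishes_upto_def by simp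
qed

lemma vanishes_upto_lead_exp_uminus_less: "0 < e \<Longrightarrow> vanishes_upto (lead_exp e) x \<Longrightarrow> - x < e"
  using vanishes_upto_lead_exp_less[of e "- x"] by simp

lemma lead_exp_le_of_not_vanishes_upto:
  assumes "\<not> vanishes_upto q x"
  shows "lead_exp x \<le> q"
proof (rule ccontr)
  assume "\<not> lead_exp x \<le> q"
  then have "vanishes_upto q x"
    using coeff_lead_exp(2)[of x] unfolding vanishes_upto_def by (cases "x = 0") auto
  with assms show False ..
qed

lemma vanishes_upto_le:
  assumes "0 \<le> a" and "a \<le> s" and "vanishes_upto q s"
  shows "vanishes_upto q a"
proof (rule ccontr)
  assume a: "\<not> vanishes_upto q a"
  then have "a \<noteq> 0" by auto
  with assms(1) have "0 < a" by simp
  moreover have "vanishes_upto (lead_exp a) s"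
    using lead_exp_le_of_not_vanishes_upto[OF a] assms(3) by (rule vanishes_upto_mono)
  ultimately have "s < a"
    by (rule vanishes_upto_lead_exp_less)
  with assms(2) show False by simp
qed

lemma vanishes_upto_of_less_lc_monom:
  assumes "0 \<le> x" and "x < lc_monom 1 (q + 1)"
  shows "vanishes_upto q x"
proof (rule ccontr)
  assume nv: "\<not> vanishes_upto q x"
  then have "x \<noteq> 0" by auto
  with assms(1) have "0 < x" by simp
  moreover have "vanishes_upto (lead_exp x) (lc_monom 1 (q + 1))"
    using lead_exp_le_of_not_vanishes_upto[OF nv] by (intro vanishes_upto_lc_monom) linarith
  ultimately have "lc_monom 1 (q + 1) < x"
    by (rule vanishes_upto_lead_exp_less)
  with assms(2) show False by (rule less_asym)
qed

lemma vanishes_upto_of_bounded: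
  assumes "x < lc_monom 1 (q + 1)" and "- x < lc_monom 1 (q + 1)"
  shows "vanishes_upto q x"
proof (cases "0 \<le> x")
  case True
  then show ?thesis using assms(1) by (rule vanishes_upto_of_less_lc_monom)
next
  case False
  then have "0 \<le> - x" by simp
  then have "vanishes_upto q (- x)"
    using assms(2) by (rule vanishes_upto_of_less_lc_monom)
  then show ?thesis by simp
qed

lemma lc_pos_split3:
  assumes "0 < e"
  obtains d :: lc where "0 < d" and "d + d + d < e"
proof
  let ?d = "lc_monom 1 (lead_exp e + 1)"
  show "0 < ?d"
    by (rule lc_monom_pos) simp
  have "vanishes_upto (lead_exp e) ?d"
    by (rule vanishes_upto_lc_monom) simp
  then have "vanishes_upto (lead_exp e) (?d + ?d + ?d)"
    by (intro vanishes_upto_add)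
  with assms show "?d + ?d + ?d < e"
    by (rule vanishes_upto_lead_exp_less)
qed

lemma lc_pos_split2:
  assumes "0 < e"
  obtains d :: lc where "0 < d" and "d + d < e"
proof -
  obtain d where "0 < d" and "d + d + d < e"
    using assms by (rule lc_pos_split3)
  moreover have "d + d < d + d + d"
    using \<open>0 < d\<close> by simp
  ultimately show thesis
    using that less_trans by blast
qed

section \<open>Convergence and series\<close>

definition lc_null :: "(nat \<Rightarrow> lc) \<Rightarrow> bool" where
  "lc_null a \<longleftrightarrow> (\<forall>q. \<forall>\<^sub>F n in sequentially. vanishes_upto q (a n))"

lemma lc_tendsto_iff_null: "lc_tendsto X L \<longleftrightarrow> lc_null (\<lambda>n. X n - L)"
proof
  assume X: "lc_tendsto X L"
  show "lc_null (\<lambda>n. X n - L)"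
    unfolding lc_null_def
  proof
    fix q :: rat
    define m where "m = lc_monom 1 (q + 1)"
    have "0 < m"
      unfolding m_def by (rule lc_monom_pos) simp
    with X obtain N where N: "\<forall>n\<ge>N. lc_less (X n - L) m \<and> lc_less (L - X n) m"
      unfolding lc_tendsto_def by simp blast
    show "\<forall>\<^sub>F n in sequentially. vanishes_upto q (X n - L)"
      unfolding eventually_sequentially
    proof (intro exI allI impI)
      fix n assume "N \<le> n"
      with N have "X n - L < m" and "- (X n - L) < m" by simp_all
      then show "vanishes_upto q (X n - L)"
        unfolding m_def by (rule vanishes_upto_of_bounded)
    qed
  qed
next
  assume null: "lc_null (\<lambda>n. X n - L)"
  show "lc_tendsto X L"
    unfolding lc_tendsto_def
  proof (intro allI impI)
    fix e assume "lc_pos e"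
    then have e: "0 < e" by simp
    from null obtain N where N: "\<forall>n\<ge>N. vanishes_upto (lead_exp e) (X n - L)"
      unfolding lc_null_def eventually_sequentially by blast
    show "\<exists>N. \<forall>n\<ge>N. lc_less (X n - L) e \<and> lc_less (L - X n) e"
    proof (intro exI allI impI)
      fix n assume "N \<le> n"
      with N have "vanishes_upto (lead_exp e) (X n - L)" by simp
      then have "X n - L < e" and "- (X n - L) < e"
        using vanishes_upto_lead_exp_less[OF e] vanishes_upto_lead_exp_uminus_less[OF e] by blast+
      then show "lc_less (X n - L) e \<and> lc_less (L - X n) e" by simp
    qed
  qed
qed

lemma lc_null_add:
  assumes "lc_null a" and "lc_null b"
  shows "lc_null (\<lambda>n. a n + b n)"
  unfolding lc_null_def
proof
  fix q
  from assms have "\<forall>\<^sub>F n in sequentially. vanishes_upto q (a n)"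
    and "\<forall>\<^sub>F n in sequentially. vanishes_upto q (b n)"
    unfolding lc_null_def by blast+
  then show "\<forall>\<^sub>F n in sequentially. vanishes_upto q (a n + b n)"
    by eventually_elim (rule vanishes_upto_add)
qed

lemma lc_null_diff:
  assumes "lc_null a" and "lc_null b"
  shows "lc_null (\<lambda>n. a n - b n)"
  unfolding lc_null_def
proof
  fix q
  from assms have "\<forall>\<^sub>F n in sequentially. vanishes_upto q (a n)"
    and "\<forall>\<^sub>F n in sequentially. vanishes_upto q (b n)"
    unfolding lc_null_def by blast+
  then show "\<forall>\<^sub>F n in sequentially. vanishes_upto q (a n - b n)"
    by eventually_elim (rule vanishes_upto_diff)
qed

lemma lc_null_shift_iff: "lc_null (\<lambda>n. a (n + k)) \<longleftrightarrow> lc_null a"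
  unfolding lc_null_def using eventually_sequentially_seg[of "\<lambda>n. vanishes_upto _ (a n)"] by blast

lemma lc_null_le:
  assumes "\<And>n. 0 \<le> a n" and "\<And>n. a n \<le> b n" and "lc_null b"
  shows "lc_null a"
  unfolding lc_null_def
proof
  fix q
  from assms(3) have "\<forall>\<^sub>F n in sequentially. vanishes_upto q (b n)"
    unfolding lc_null_def by blast
  then show "\<forall>\<^sub>F n in sequentially. vanishes_upto q (a n)"
    by eventually_elim (rule vanishes_upto_le[OF assms(1,2)])
qed

lemma lc_tendsto_unique: "lc_tendsto X L \<Longrightarrow> lc_tendsto X L' \<Longrightarrow> L = L'"
  unfolding lc_tendsto_iff_null
proof (rule lc_eqI)
  fix r assume "lc_null (\<lambda>n. X n - L)" "lc_null (\<lambda>n. X n - L')"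
  then have "lc_null (\<lambda>n. (X n - L') - (X n - L))"
    by (rule lc_null_diff[rotated])
  then have "\<forall>\<^sub>F n in sequentially. vanishes_upto r (L - L')"
    unfolding lc_null_def by simp
  then have "vanishes_upto r (L - L')"
    by simp
  then show "coeff L r = coeff L' r"
    unfolding vanishes_upto_def by simp
qed

lemma lc_tendsto_vanishes_upto:
  assumes "lc_tendsto X L" and "\<forall>\<^sub>F n in sequentially. vanishes_upto q (X n)"
  shows "vanishes_upto q L"
proof -
  from assms(1) have "\<forall>\<^sub>F n in sequentially. vanishes_upto q (X n - L)"
    unfolding lc_tendsto_iff_null lc_null_def by blast
  with assms(2) have "\<forall>\<^sub>F n in sequentially. vanishes_upto q (X n - (X n - L))"
    by eventually_elim (rule vanishes_upto_diff)
  then show ?thesis by simp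
qed

lemma lc_tendsto_le:
  assumes "lc_tendsto X L" and "\<forall>\<^sub>F n in sequentially. X n \<le> c"
  shows "L \<le> c"
proof (rule ccontr)
  assume "\<not> L \<le> c"
  then have e: "0 < L - c" by simp
  have "\<forall>\<^sub>F n in sequentially. vanishes_upto (lead_exp (L - c)) (X n - L)"
    using assms(1) unfolding lc_tendsto_iff_null lc_null_def by blast
  with assms(2) have "\<forall>\<^sub>F n in sequentially. False"
    by eventually_elim (use vanishes_upto_lead_exp_uminus_less[OF e] in fastforce)
  then show False by simp
qed

lemma lc_tendsto_ge:
  assumes "lc_tendsto X L" and "\<forall>\<^sub>F n in sequentially. c \<le> X n"
  shows "c \<le> L"
proof (rule ccontr)
  assume "\<not> c \<le> L"
  then have e: "0 < c - L" by simp
  have "\<forall>\<^sub>F n in sequentially. vanishes_upto (lead_exp (c - L)) (X n - L)"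
    using assms(1) unfolding lc_tendsto_iff_null lc_null_def by blast
  with assms(2) have "\<forall>\<^sub>F n in sequentially. False"
    by eventually_elim (use vanishes_upto_lead_exp_less[OF e] in fastforce)
  then show False by simp
qed

lemma lc_sums_iff_null: "lc_sums a s \<longleftrightarrow> lc_null (\<lambda>N. (\<Sum>n<N. a n) - s)"
  unfolding lc_sums_def lc_tendsto_iff_null ..

lemma lc_suminf_eqI: "lc_sums a s \<Longrightarrow> lc_suminf a = s"
  unfolding lc_suminf_def lc_sums_def using lc_tendsto_unique by blast

lemma lc_sums_imp_null:
  assumes "lc_sums a s"
  shows "lc_null a"
proof -
  have partial: "lc_null (\<lambda>n. (\<Sum>k<n. a k) - s)"
    using assms unfolding lc_sums_iff_null .
  have "lc_null (\<lambda>n. ((\<Sum>k<n + 1. a k) - s) - ((\<Sum>k<n. a k) - s))"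
    using lc_null_shift_iff[of _ 1, THEN iffD2, OF partial] partial by (rule lc_null_diff)
  then show ?thesis by simp
qed

lemma lc_sums_add: "lc_sums a s \<Longrightarrow> lc_sums b t \<Longrightarrow> lc_sums (\<lambda>n. a n + b n) (s + t)"
  unfolding lc_sums_iff_null
  by (drule (1) lc_null_add) (simp add: sum.distrib algebra_simps)

text \<open>Completeness: the sum takes its coefficient at \<open>r\<close> from any partial sum beyond the point
  after which all terms vanish up to \<open>r\<close>.\<close>
lemma lc_null_imp_sums:
  assumes "lc_null a"
  shows "\<exists>s. lc_sums a s"
proof -
  define P where "P n = (\<Sum>k<n. a k)" for n
  define N where "N q = (LEAST N. \<forall>n\<ge>N. vanishes_upto q (a n))" for q
  have N: "\<forall>n\<ge>N q. vanishes_upto q (a n)" for q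
    using assms LeastI_ex[of "\<lambda>N. \<forall>n\<ge>N. vanishes_upto q (a n)"]
    unfolding lc_null_def eventually_sequentially N_def by blast
  have N_mono: "N q' \<le> N q" if "q' \<le> q" for q q'
    unfolding N_def[of q'] using N[of q] vanishes_upto_mono[OF that] by (blast intro: Least_le)
  have P_diff: "vanishes_upto q (P m - P n)" if "N q \<le> n" and "n \<le> m" for q n m
  proof -
    have "P m - P n = (\<Sum>k\<in>{n..<m}. a k)"
      unfolding P_def lessThan_atLeast0 using that(2) by (rule sum_diff_nat_ivl[OF le0])
    then show ?thesis
      using N[of q] that(1) by (auto intro!: vanishes_upto_sum)
  qed
  define f where "f r = coeff (P (N r)) r" for r
  have f: "f r = coeff (P n) r" if "r \<le> q" and "N q \<le> n" for r q n
    using P_diff[of r "N r" n] N_mono[OF that(1)] that(2)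
    unfolding f_def vanishes_upto_def by simp
  have "finite {r. r \<le> q \<and> f r \<noteq> 0}" for q
    using finite_nonzero_coeffs_le[of q "P (N q)"] f[of _ q "N q"]
    by (auto elim!: finite_subset[rotated])
  then have coeff_s: "coeff (Abs_lc f) = f"
    by (simp add: Abs_lc_inverse)
  have "\<forall>n\<ge>N q. vanishes_upto q (P n - Abs_lc f)" for q
    unfolding vanishes_upto_def using f by (simp add: coeff_s)
  then have "lc_null (\<lambda>n. P n - Abs_lc f)"
    unfolding lc_null_def eventually_sequentially by blast
  then show ?thesis
    unfolding lc_sums_iff_null P_def by blast
qed

lemma lc_tendsto_of_null_increments:
  assumes "lc_null (\<lambda>n. x (Suc n) - x n)"
  shows "\<exists>L. lc_tendsto x L"
proof -
  obtain s where "lc_sums (\<lambda>n. x (Suc n) - x n) s"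
    using lc_null_imp_sums[OF assms] ..
  then have "lc_null (\<lambda>n. x n - (s + x 0))"
    unfolding lc_sums_iff_null sum_lessThan_telescope by (simp add: algebra_simps)
  then show ?thesis
    unfolding lc_tendsto_iff_null by blast
qed

lemma sum_le_lc_sums:
  assumes "lc_sums a s" and "\<And>n. 0 \<le> a n"
  shows "(\<Sum>k<N. a k) \<le> s"
  using assms(1) unfolding lc_sums_def
proof (rule lc_tendsto_ge)
  show "\<forall>\<^sub>F n in sequentially. (\<Sum>k<N. a k) \<le> (\<Sum>k<n. a k)"
    unfolding eventually_sequentially using assms(2) by (auto intro!: sum_mono2)
qed

lemma lc_sums_nonneg: "lc_sums a s \<Longrightarrow> (\<And>n. 0 \<le> a n) \<Longrightarrow> 0 \<le> s"
  using sum_le_lc_sums[of a s 0] by simp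

lemma lc_sums_le: "lc_sums a s \<Longrightarrow> (\<And>N. (\<Sum>k<N. a k) \<le> c) \<Longrightarrow> s \<le> c"
  unfolding lc_sums_def by (erule lc_tendsto_le) simp

lemma lc_sums_comparison:
  assumes "\<And>n. 0 \<le> a n" and "\<And>n. a n \<le> b n" and "lc_sums b t"
  shows "\<exists>s. lc_sums a s \<and> s \<le> t"
proof -
  obtain s where s: "lc_sums a s"
    using lc_null_imp_sums lc_null_le[OF assms(1,2) lc_sums_imp_null[OF assms(3)]] by blast
  have "(\<Sum>k<N. a k) \<le> t" for N
    using sum_mono[of "{..<N}" a b] assms sum_le_lc_sums[OF assms(3)] order_trans by blast
  then show ?thesis
    using s lc_sums_le by blast
qed

lemma lc_sums_split_bound:
  assumes "\<And>n. 0 \<le> a n" and "\<And>n. 0 \<le> b n" and "\<And>n. a n + b n \<le> c n" and "lc_sums c t"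
  obtains s s' where "lc_sums a s" and "lc_sums b s'" and "s + s' \<le> t"
proof -
  have "a n \<le> a n + b n" and "b n \<le> a n + b n" for n
    using assms(1,2)[of n] by simp_all
  then have "a n \<le> c n" and "b n \<le> c n" for n
    using assms(3)[of n] by (blast intro: order_trans)+
  then obtain s s' where s: "lc_sums a s" and s': "lc_sums b s'"
    using lc_sums_comparison[of a, OF assms(1) _ assms(4)]
      lc_sums_comparison[of b, OF assms(2) _ assms(4)] by blast
  have "s + s' \<le> t"
    using lc_sums_add[OF s s']
  proof (rule lc_sums_le)
    have "0 \<le> c n" for n
      using assms(1-3)[of n] by (meson add_nonneg_nonneg order_trans)
    then show "(\<Sum>n<N. a n + b n) \<le> t" for N
      using sum_mono[of "{..<N}", OF assms(3)] sum_le_lc_sums[OF assms(4)] by (meson order_trans)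
  qed
  with s s' show thesis
    using that by blast
qed

lemma lc_sums_term_le:
  assumes "lc_sums a s" and "\<And>n. 0 \<le> a n"
  shows "a i \<le> s"
proof -
  have "a i \<le> (\<Sum>k<Suc i. a k)"
    using sum_nonneg[of "{..<i}" a] assms(2) by simp
  also have "\<dots> \<le> s"
    using assms by (rule sum_le_lc_sums)
  finally show ?thesis .
qed

lemma lc_sums_Suc:
  assumes "lc_sums (\<lambda>n. a (Suc n)) s"
  shows "lc_sums a (a 0 + s)"
proof -
  have "(\<lambda>n. (\<Sum>k<n + 1. a k) - (a 0 + s)) = (\<lambda>n. (\<Sum>k<n. a (Suc k)) - s)"
    by (rule ext, simp only: Suc_eq_plus1[symmetric] sum.lessThan_Suc_shift) simp
  then have "lc_null (\<lambda>n. (\<Sum>k<n + 1. a k) - (a 0 + s))"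
    using assms unfolding lc_sums_iff_null by simp
  then show ?thesis
    unfolding lc_sums_iff_null using lc_null_shift_iff[of "\<lambda>n. (\<Sum>k<n. a k) - (a 0 + s)" 1] by simp
qed

text \<open>The exponents increase without bound, so the slack terms form a null sequence, while every
  finite sum of them vanishes up to the leading exponent of \<open>e\<close> and hence lies below \<open>e\<close>.\<close>
definition slack :: "lc \<Rightarrow> nat \<Rightarrow> lc" where
  "slack e k = lc_monom 1 (lead_exp e + 1 + of_nat k)"

lemma slack_pos: "0 < slack e k"
  unfolding slack_def by (rule lc_monom_pos) simp

lemma lc_null_slack: "lc_null (slack e)"
  unfolding lc_null_def eventually_sequentially
proof
  fix q
  obtain K :: nat where "q - lead_exp e < of_nat K"
    using reals_Archimedean2 by blast
  then have "\<forall>k\<ge>K. q < lead_exp e + 1 + of_nat k"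
    by (auto dest!: of_nat_mono[where 'a = rat])
  then show "\<exists>K. \<forall>k\<ge>K. vanishes_upto q (slack e k)"
    unfolding slack_def by (blast intro: vanishes_upto_lc_monom)
qed

lemma slack_sums_less:
  assumes "0 < e"
  obtains s where "lc_sums (slack e) s" and "s < e"
proof -
  obtain s where s: "lc_sums (slack e) s"
    using lc_null_imp_sums lc_null_slack by blast
  have "vanishes_upto (lead_exp e) (\<Sum>k<n. slack e k)" for n
    by (auto simp: slack_def intro!: vanishes_upto_sum vanishes_upto_lc_monom)
  then have "\<forall>\<^sub>F n in sequentially. vanishes_upto (lead_exp e) (\<Sum>k<n. slack e k)"
    by (intro always_eventually allI)
  with s have "vanishes_upto (lead_exp e) s"
    unfolding lc_sums_def by (rule lc_tendsto_vanishes_upto)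
  with assms have "s < e"
    by (rule vanishes_upto_lead_exp_less)
  with s show thesis ..
qed

lemma lc_null_prod_decode:
  assumes nonneg: "\<And>k i. 0 \<le> a k i" and bound: "\<And>k i. a k i \<le> t k"
    and rows: "\<And>k. lc_null (a k)" and "lc_null t"
  shows "lc_null (\<lambda>j. case_prod a (prod_decode j))"
  unfolding lc_null_def eventually_sequentially
proof
  fix q
  obtain K where K: "\<forall>k\<ge>K. vanishes_upto q (t k)"
    using \<open>lc_null t\<close> unfolding lc_null_def eventually_sequentially by blast
  have "\<forall>k. \<exists>i\<^sub>0. \<forall>i\<ge>i\<^sub>0. vanishes_upto q (a k i)"
    using rows unfolding lc_null_def eventually_sequentially by blast
  then obtain I where I: "\<And>k i. I k \<le> i \<Longrightarrow> vanishes_upto q (a k i)"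
    by metis
  define B where "B = prod_encode ` (SIGMA k:{..<K}. {..<I k})"
  have "finite B"
    unfolding B_def by auto
  then obtain J where J: "\<forall>j\<in>B. j < J"
    using finite_nat_set_iff_bounded by blast
  have "vanishes_upto q (case_prod a (prod_decode j))" if "J \<le> j" for j
  proof (cases "prod_decode j")
    case (Pair k i)
    then have "j = prod_encode (k, i)"
      by (metis prod_decode_inverse)
    show ?thesis
    proof (cases "k < K")
      case True
      with J \<open>J \<le> j\<close> \<open>j = prod_encode (k, i)\<close> have "I k \<le> i"
        unfolding B_def by (meson SigmaI image_eqI lessThan_iff not_le leD)
      then show ?thesis using I Pair by simp
    next
      case False
      then show ?thesis
        using K vanishes_upto_le[OF nonneg bound] Pair by simp
    qed
  qed
  then show "\<exists>J. \<forall>j\<ge>J. vanishes_upto q (case_prod a (prod_decode j))"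
    by blast
qed

lemma sum_prod_decode_le:
  fixes a :: "nat \<Rightarrow> nat \<Rightarrow> 'a::ordered_comm_monoid_add"
  assumes nonneg: "\<And>k i. 0 \<le> a k i" and rows: "\<And>k I. (\<Sum>i<I. a k i) \<le> t k"
  shows "\<exists>K. (\<Sum>j<J. case_prod a (prod_decode j)) \<le> (\<Sum>k<K. t k)"
proof -
  define D where "D = prod_decode ` {..<J}"
  have "finite D"
    unfolding D_def by simp
  then obtain K I where K: "\<forall>k\<in>fst ` D. k < K" and I: "\<forall>i\<in>snd ` D. i < I"
    using finite_nat_set_iff_bounded finite_imageI by meson
  then have D: "D \<subseteq> {..<K} \<times> {..<I}"
    by force
  have "(\<Sum>j<J. case_prod a (prod_decode j)) = (\<Sum>p\<in>D. case_prod a p)"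
    unfolding D_def by (subst sum.reindex) (auto intro: inj_on_subset[OF inj_prod_decode])
  also have "\<dots> \<le> (\<Sum>p\<in>{..<K} \<times> {..<I}. case_prod a p)"
    using D nonneg by (intro sum_mono2) auto
  also have "\<dots> = (\<Sum>k<K. \<Sum>i<I. a k i)"
    by (simp add: sum.cartesian_product)
  also have "\<dots> \<le> (\<Sum>k<K. t k)"
    using rows by (rule sum_mono)
  finally show ?thesis by blast
qed

lemma sum_interleave:
  fixes a b :: "nat \<Rightarrow> 'a::comm_monoid_add"
  shows "(\<Sum>j<2 * n. if even j then a (j div 2) else b (j div 2)) = (\<Sum>i<n. a i) + (\<Sum>i<n. b i)"
  by (induction n) (simp_all add: algebra_simps)

lemma lc_null_interleave:
  assumes "lc_null a" and "lc_null b"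
  shows "lc_null (\<lambda>j. if even j then a (j div 2) else b (j div 2))"
  unfolding lc_null_def eventually_sequentially
proof
  fix q
  obtain N where "\<forall>i\<ge>N. vanishes_upto q (a i) \<and> vanishes_upto q (b i)"
    using assms unfolding lc_null_def eventually_sequentially by (metis le_trans nat_le_linear)
  then have "\<forall>j\<ge>2 * N. vanishes_upto q (if even j then a (j div 2) else b (j div 2))"
    by auto
  then show "\<exists>J. \<forall>j\<ge>J. vanishes_upto q (if even j then a (j div 2) else b (j div 2))" ..
qed

definition interval_ends :: "lc \<Rightarrow> lc \<Rightarrow> lc set \<Rightarrow> bool" where
  "interval_ends a b I \<longleftrightarrow> {a<..<b} \<subseteq> I \<and> I \<subseteq> {a..b}"

lemma interval_ends_left_le:
  assumes "interval_ends a b I" and "interval_ends a' b' I" and "a' < b'"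
  shows "a \<le> a'"
proof (rule ccontr)
  assume "\<not> a \<le> a'"
  then have "a' < min a b'"
    using assms(3) by simp
  then obtain x where "a' < x" and "x < min a b'"
    using dense by blast
  then have "x \<in> I"
    using assms(2) unfolding interval_ends_def by auto
  then have "x \<in> {a..b}"
    using assms(1) unfolding interval_ends_def by blast
  with \<open>x < min a b'\<close> show False by auto
qed

lemma interval_ends_right_le:
  assumes "interval_ends a b I" and "interval_ends a' b' I" and "a' < b'"
  shows "b' \<le> b"
proof (rule ccontr)
  assume "\<not> b' \<le> b"
  then have "max a' b < b'"
    using assms(3) by simp
  then obtain x where "max a' b < x" and "x < b'"
    using dense by blast
  then have "x \<in> I"
    using assms(2) unfolding interval_ends_def by auto
  then have "x \<in> {a..b}"
    using assms(1) unfolding interval_ends_def by blast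
  with \<open>max a' b < x\<close> show False by auto
qed

lemma interval_ends_unique:
  assumes "interval_ends a b I" and "interval_ends a' b' I" and "a < b" and "a' < b'"
  shows "a = a'" and "b = b'"
  using interval_ends_left_le[OF assms(1,2,4)] interval_ends_left_le[OF assms(2,1,3)]
    interval_ends_right_le[OF assms(1,2,4)] interval_ends_right_le[OF assms(2,1,3)]
  by simp_all

lemma lc_interval_len_ends:
  assumes "lc_interval_len I l"
  obtains a b where "a < b" and "l = b - a" and "interval_ends a b I"
proof -
  obtain a b where "a < b" and "l = b - a"
    and "I = {x. a \<le> x \<and> x \<le> b} \<or> I = {x. a \<le> x \<and> x < b} \<or>
      I = {x. a < x \<and> x \<le> b} \<or> I = {x. a < x \<and> x < b}"
    using assms unfolding lc_interval_len_def by auto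
  moreover from this have "interval_ends a b I"
    unfolding interval_ends_def by (elim disjE) auto
  ultimately show thesis
    using that by blast
qed

lemma lc_length_eqI:
  assumes "lc_interval_len I l"
  shows "lc_length I = l"
  unfolding lc_length_def
proof (rule the_equality)
  fix l' assume "lc_interval_len I l'"
  with assms show "l' = l"
    by (elim lc_interval_len_ends) (metis interval_ends_unique)
qed (fact assms)

lemma lc_is_interval_ends:
  assumes "lc_is_interval I"
  obtains a b where "a < b" and "lc_length I = b - a" and "interval_ends a b I"
  using assms lc_length_eqI unfolding lc_is_interval_def by (metis lc_interval_len_ends)

lemma lc_length_pos: "lc_is_interval I \<Longrightarrow> 0 < lc_length I"
  by (elim lc_is_interval_ends) simp

lemma lc_length_diff_le:
  assumes "lc_is_interval I" and "x \<in> I" and "y \<in> I"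
  shows "x - y \<le> lc_length I"
proof -
  obtain a b where "lc_length I = b - a" and "interval_ends a b I"
    using assms(1) by (rule lc_is_interval_ends)
  then have "x \<in> {a..b}" and "y \<in> {a..b}"
    using assms(2,3) unfolding interval_ends_def by blast+
  with \<open>lc_length I = b - a\<close> show ?thesis
    by (simp add: diff_mono)
qed

lemma lc_is_interval_atLeastAtMost: "a < b \<Longrightarrow> lc_is_interval {a..b}"
  and lc_length_atLeastAtMost: "a < b \<Longrightarrow> lc_length {a..b} = b - a"
proof -
  assume "a < b"
  then have "lc_interval_len {a..b} (b - a)"
    unfolding lc_interval_len_def by (intro exI[of _ a] exI[of _ b]) auto
  then show "lc_is_interval {a..b}" and "lc_length {a..b} = b - a"
    unfolding lc_is_interval_def by (auto intro: lc_length_eqI)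
qed

lemma lc_intervals_ends:
  assumes "\<And>n. lc_is_interval (S n)"
  obtains a b where "\<And>n. a n < b n" and "\<And>n. lc_length (S n) = b n - a n"
    and "\<And>n. S n \<subseteq> {a n..b n}"
proof -
  have "\<forall>n. \<exists>a b. a < b \<and> lc_length (S n) = b - a \<and> S n \<subseteq> {a..b}"
  proof
    fix n
    obtain a b where "a < b" "lc_length (S n) = b - a" "interval_ends a b (S n)"
      using assms by (rule lc_is_interval_ends)
    then show "\<exists>a b. a < b \<and> lc_length (S n) = b - a \<and> S n \<subseteq> {a..b}"
      unfolding interval_ends_def by blast
  qed
  then show thesis
    using that by metis
qed

lemma cover_sumsI: "lc_cover S A \<Longrightarrow> lc_sums (\<lambda>n. lc_length (S n)) t \<Longrightarrow> t \<in> cover_sums A"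
  unfolding cover_sums_def using lc_suminf_eqI by fastforce

lemma cover_sumsE:
  assumes "t \<in> cover_sums A"
  obtains S where "lc_cover S A" and "lc_sums (\<lambda>n. lc_length (S n)) t"
  using assms lc_suminf_eqI unfolding cover_sums_def lc_cover_def by blast

lemma lc_cover_length_nonneg: "lc_cover S A \<Longrightarrow> 0 \<le> lc_length (S n)"
  unfolding lc_cover_def using lc_length_pos less_imp_le by blast

lemma cover_sums_nonneg: "t \<in> cover_sums A \<Longrightarrow> 0 \<le> t"
  by (erule cover_sumsE) (use lc_sums_nonneg lc_cover_length_nonneg in blast)

lemma cover_sums_antimono: "A \<subseteq> B \<Longrightarrow> cover_sums B \<subseteq> cover_sums A"
  unfolding cover_sums_def lc_cover_def by blast

lemma lc_cover_UN:
  assumes cov: "\<And>k. lc_cover (S k) (X k)"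
    and sums: "\<And>k. lc_sums (\<lambda>i. lc_length (S k i)) (t k)"
    and "lc_null t" and bound: "\<And>K. (\<Sum>k<K. t k) \<le> \<sigma>"
  shows "\<exists>u\<in>cover_sums (\<Union>k. X k). u \<le> \<sigma>"
proof -
  define T where "T j = case_prod S (prod_decode j)" for j
  have length_T: "lc_length (T j) = case_prod (\<lambda>k i. lc_length (S k i)) (prod_decode j)" for j
    unfolding T_def by (simp split: prod.split)
  have nonneg: "0 \<le> lc_length (S k i)" for k i
    using cov by (rule lc_cover_length_nonneg)
  have "lc_null (\<lambda>j. lc_length (T j))"
    unfolding length_T
    using nonneg lc_sums_term_le[OF sums nonneg] lc_sums_imp_null[OF sums] \<open>lc_null t\<close>
    by (rule lc_null_prod_decode)
  then obtain u where u: "lc_sums (\<lambda>j. lc_length (T j)) u"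
    using lc_null_imp_sums by blast
  have "lc_cover T (\<Union>k. X k)"
    unfolding lc_cover_def
  proof (intro conjI allI subsetI)
    show "lc_is_interval (T j)" for j
      using cov unfolding T_def lc_cover_def by (simp split: prod.split)
    fix x assume "x \<in> (\<Union>k. X k)"
    then obtain k i where "x \<in> S k i"
      using cov unfolding lc_cover_def by blast
    then have "x \<in> T (prod_encode (k, i))"
      unfolding T_def by simp
    then show "x \<in> (\<Union>j. T j)" by blast
  qed (use u in blast)
  moreover have "u \<le> \<sigma>"
    using u
  proof (rule lc_sums_le)
    fix J
    obtain K where "(\<Sum>j<J. lc_length (T j)) \<le> (\<Sum>k<K. t k)"
      unfolding length_T using nonneg sum_le_lc_sums[OF sums nonneg] by (metis sum_prod_decode_le)
    then show "(\<Sum>j<J. lc_length (T j)) \<le> \<sigma>"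
      using bound order_trans by blast
  qed
  ultimately show ?thesis
    using cover_sumsI[OF _ u] by blast
qed

lemma cover_sums_Un:
  assumes "t\<^sub>1 \<in> cover_sums A" and "t\<^sub>2 \<in> cover_sums B"
  shows "\<exists>u\<in>cover_sums (A \<union> B). u \<le> t\<^sub>1 + t\<^sub>2"
proof -
  obtain S\<^sub>1 where S\<^sub>1: "lc_cover S\<^sub>1 A" "lc_sums (\<lambda>i. lc_length (S\<^sub>1 i)) t\<^sub>1"
    using assms(1) by (rule cover_sumsE)
  obtain S\<^sub>2 where S\<^sub>2: "lc_cover S\<^sub>2 B" "lc_sums (\<lambda>i. lc_length (S\<^sub>2 i)) t\<^sub>2"
    using assms(2) by (rule cover_sumsE)
  define T where "T j = (if even j then S\<^sub>1 (j div 2) else S\<^sub>2 (j div 2))" for j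
  have length_T: "lc_length (T j) =
      (if even j then lc_length (S\<^sub>1 (j div 2)) else lc_length (S\<^sub>2 (j div 2)))" for j
    unfolding T_def by simp
  have "lc_null (\<lambda>j. lc_length (T j))"
    unfolding length_T using S\<^sub>1(2) S\<^sub>2(2) by (intro lc_null_interleave lc_sums_imp_null)
  then obtain u where u: "lc_sums (\<lambda>j. lc_length (T j)) u"
    using lc_null_imp_sums by blast
  have "lc_cover T (A \<union> B)"
    unfolding lc_cover_def
  proof (intro conjI allI subsetI)
    show "lc_is_interval (T j)" for j
      using S\<^sub>1(1) S\<^sub>2(1) unfolding T_def lc_cover_def by simp
    fix x assume "x \<in> A \<union> B"
    then have "(\<exists>i. x \<in> T (2 * i)) \<or> (\<exists>i. x \<in> T (2 * i + 1))"
      using S\<^sub>1(1) S\<^sub>2(1) unfolding T_def lc_cover_def by auto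
    then show "x \<in> (\<Union>j. T j)" by blast
  qed (use u in blast)
  moreover have "u \<le> t\<^sub>1 + t\<^sub>2"
    using u
  proof (rule lc_sums_le)
    have nonneg: "0 \<le> lc_length (T j)" for j
      unfolding length_T using S\<^sub>1(1) S\<^sub>2(1) by (simp add: lc_cover_length_nonneg)
    fix J
    have "(\<Sum>j<J. lc_length (T j)) \<le> (\<Sum>j<2 * J. lc_length (T j))"
      using nonneg by (intro sum_mono2) auto
    also have "\<dots> = (\<Sum>i<J. lc_length (S\<^sub>1 i)) + (\<Sum>i<J. lc_length (S\<^sub>2 i))"
      unfolding length_T by (rule sum_interleave)
    also have "\<dots> \<le> t\<^sub>1 + t\<^sub>2"
      using S\<^sub>1 S\<^sub>2 by (intro add_mono sum_le_lc_sums lc_cover_length_nonneg)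
    finally show "(\<Sum>j<J. lc_length (T j)) \<le> t\<^sub>1 + t\<^sub>2" .
  qed
  ultimately show ?thesis
    using cover_sumsI[OF _ u] by blast
qed

lemma outer_measure_eqI:
  assumes "\<And>t. t \<in> cover_sums A \<Longrightarrow> m \<le> t"
    and "\<And>e. 0 < e \<Longrightarrow> \<exists>t\<in>cover_sums A. t < m + e"
  shows "outer_measurable A \<and> outer_measure A = m"
proof -
  have "lc_is_inf (cover_sums A) m"
    unfolding lc_is_inf_def
  proof (intro conjI ballI allI impI)
    fix m' assume "\<forall>t\<in>cover_sums A. lc_le m' t"
    then have "m' \<le> m + e" if "0 < e" for e
      using assms(2)[OF that] by (auto dest: order.strict_implies_order)
    then show "lc_le m' m"
      by (simp add: lc_le_of_forall_pos)
  qed (use assms(1) in simp)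
  moreover have "lc_is_inf (cover_sums A) m' \<Longrightarrow> m' = m" for m'
    using calculation unfolding lc_is_inf_def by (meson antisym lc_le_iff)
  ultimately show ?thesis
    unfolding outer_measurable_def outer_measure_def by (metis the_equality)
qed

lemma outer_measure_is_inf: "outer_measurable A \<Longrightarrow> lc_is_inf (cover_sums A) (outer_measure A)"
  unfolding outer_measurable_def outer_measure_def lc_is_inf_def
  by (rule theI') (meson antisym lc_le_iff)

lemma outer_measure_le: "outer_measurable A \<Longrightarrow> t \<in> cover_sums A \<Longrightarrow> outer_measure A \<le> t"
  using outer_measure_is_inf unfolding lc_is_inf_def by simp

lemma outer_measure_nonneg: "outer_measurable A \<Longrightarrow> 0 \<le> outer_measure A"
  using outer_measure_is_inf cover_sums_nonneg unfolding lc_is_inf_def by simp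

lemma outer_measure_approx:
  assumes "outer_measurable A" and "0 < e"
  shows "\<exists>t\<in>cover_sums A. t < outer_measure A + e"
proof (rule ccontr)
  assume "\<not> ?thesis"
  then have "\<forall>t\<in>cover_sums A. lc_le (outer_measure A + e) t"
    by (simp add: not_less)
  moreover have "\<forall>m'. (\<forall>t\<in>cover_sums A. lc_le m' t) \<longrightarrow> lc_le m' (outer_measure A)"
    using outer_measure_is_inf[OF assms(1)] unfolding lc_is_inf_def by (elim conjE)
  ultimately have "outer_measure A + e \<le> outer_measure A"
    by (metis lc_le_iff)
  with assms(2) show False by simp
qed

lemma outer_measure_mono:
  assumes "outer_measurable A" and "outer_measurable B" and "A \<subseteq> B"
  shows "outer_measure A \<le> outer_measure B"
proof (rule lc_le_of_forall_pos)
  fix e :: lc assume "0 < e"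
  then obtain t where "t \<in> cover_sums B" and "t < outer_measure B + e"
    using outer_measure_approx[OF assms(2)] by blast
  with assms(1,3) show "outer_measure A \<le> outer_measure B + e"
    using outer_measure_le cover_sums_antimono by (meson less_imp_le order_trans subsetD)
qed

lemma cover_sums_Un_approx:
  assumes "t \<in> cover_sums X" and "outer_measurable Y" and "0 < e"
  shows "\<exists>u\<in>cover_sums (X \<union> Y). u < t + outer_measure Y + e"
proof -
  obtain t' where "t' \<in> cover_sums Y" and "t' < outer_measure Y + e"
    using outer_measure_approx[OF assms(2,3)] by blast
  moreover from this obtain u where "u \<in> cover_sums (X \<union> Y)" and "u \<le> t + t'"
    using cover_sums_Un[OF assms(1)] by blast
  moreover have "t + t' < t + outer_measure Y + e"
    using \<open>t' < outer_measure Y + e\<close> by (simp add: add.assoc)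
  ultimately show ?thesis
    using le_less_trans by blast
qed

lemma cover_sums_Un_less:
  assumes "outer_measurable X" and "outer_measurable Y" and "0 < e"
  shows "\<exists>u\<in>cover_sums (X \<union> Y). u < outer_measure X + outer_measure Y + e"
proof -
  obtain d where "0 < d" and "d + d < e"
    using \<open>0 < e\<close> by (rule lc_pos_split2)
  obtain t where "t \<in> cover_sums X" and t: "t < outer_measure X + d"
    using outer_measure_approx[OF assms(1) \<open>0 < d\<close>] by blast
  then obtain u where "u \<in> cover_sums (X \<union> Y)" and "u < t + outer_measure Y + d"
    using cover_sums_Un_approx[OF _ assms(2) \<open>0 < d\<close>] by blast
  moreover have "t + outer_measure Y + d < (outer_measure X + d) + outer_measure Y + d"
    using t by simp
  moreover have "\<dots> = outer_measure X + outer_measure Y + (d + d)"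
    by (simp add: algebra_simps)
  moreover have "\<dots> < outer_measure X + outer_measure Y + e"
    using \<open>d + d < e\<close> by simp
  ultimately show ?thesis
    by (metis less_trans)
qed

lemma outer_measure_le_cover_sum_add:
  assumes "outer_measurable C" and "outer_measurable Y" and "C \<subseteq> X \<union> Y" and "t \<in> cover_sums X"
  shows "outer_measure C \<le> t + outer_measure Y"
proof (rule lc_le_of_forall_pos)
  fix e :: lc assume "0 < e"
  then obtain u where "u \<in> cover_sums (X \<union> Y)" and "u < t + outer_measure Y + e"
    using cover_sums_Un_approx[OF assms(4,2)] by blast
  with assms(1,3) show "outer_measure C \<le> t + outer_measure Y + e"
    using outer_measure_le cover_sums_antimono by (meson less_imp_le order_trans subsetD)
qed

lemma outer_measure_diff_eqI:
  assumes "outer_measurable C" and "outer_measurable Y" and "C \<subseteq> X \<union> Y"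
    and "\<And>e. 0 < e \<Longrightarrow> \<exists>t\<in>cover_sums X. t < outer_measure C - outer_measure Y + e"
  shows "outer_measurable X \<and> outer_measure X = outer_measure C - outer_measure Y"
proof (rule outer_measure_eqI)
  fix t assume "t \<in> cover_sums X"
  then show "outer_measure C - outer_measure Y \<le> t"
    using outer_measure_le_cover_sum_add[OF assms(1-3)] by (simp add: algebra_simps)
qed (fact assms(4))

section \<open>The outer measure of an interval is its length\<close>

lemma lc_monom_diff_lc_monom: "(x + lc_monom c p) - (x + lc_monom c' p) = lc_monom (c - c') p"
  by (rule lc_eqI) (simp add: coeff_lc_monom)

lemma lc_monom_eq_of_mem_interval:
  assumes "lc_is_interval I" and "vanishes_upto p (lc_length I)"
    and "x + lc_monom c p \<in> I" and "x + lc_monom c' p \<in> I"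
  shows "c = c'"
proof -
  define d where "d = (x + lc_monom c p) - (x + lc_monom c' p)"
  have "d \<le> lc_length I"
    unfolding d_def using assms(1,3,4) by (rule lc_length_diff_le)
  moreover have "- d \<le> lc_length I"
    unfolding d_def minus_diff_eq using assms(1,4,3) by (rule lc_length_diff_le)
  ultimately have "vanishes_upto p d"
    using vanishes_upto_le[of d] vanishes_upto_le[of "- d"] assms(2) by (cases "0 \<le> d") auto
  then have "vanishes_upto p (lc_monom (c - c') p)"
    unfolding d_def lc_monom_diff_lc_monom .
  then show "c = c'"
    using not_vanishes_upto_lc_monom[of "c - c'" p] by auto
qed

text \<open>If \<open>y - x\<close> had leading exponent \<open>p \<le> q\<close>, picking for every real \<open>c\<close> between \<open>0\<close> and the
  leading coefficient an interval \<open>S n\<close> containing \<open>x + lc_monom c p\<close> would inject a real interval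
  into \<open>G\<close>.\<close>
lemma vanishes_upto_of_cover:
  fixes S :: "nat \<Rightarrow> lc set"
  assumes cover: "{x<..<y} \<subseteq> (\<Union>n\<in>G. S n)" and "x < y"
    and ints: "\<And>n. n \<in> G \<Longrightarrow> lc_is_interval (S n)"
    and small: "\<And>n. n \<in> G \<Longrightarrow> vanishes_upto q (lc_length (S n))"
  shows "vanishes_upto q (y - x)"
proof (rule ccontr)
  assume nv: "\<not> vanishes_upto q (y - x)"
  define p where "p = lead_exp (y - x)"
  define c\<^sub>0 where "c\<^sub>0 = coeff (y - x) p"
  have "0 < c\<^sub>0" and below_p: "\<And>r. r < p \<Longrightarrow> coeff (y - x) r = 0"
    using coeff_lead_exp_pos[of "y - x"] coeff_lead_exp(2)[of "y - x"] \<open>x < y\<close> unfolding p_def c\<^sub>0_def by auto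
  have "p \<le> q"
    unfolding p_def using nv by (rule lead_exp_le_of_not_vanishes_upto)
  define z where "z c = x + lc_monom c p" for c
  have z_in: "z c \<in> {x<..<y}" if "c \<in> {0<..<c\<^sub>0}" for c
  proof -
    have "x < z c"
      using lc_monom_pos[of c p] that unfolding z_def by simp
    moreover have "z c < y"
      unfolding lc_less_iff_leading z_def
      using that below_p by (intro exI[of _ p]) (simp add: coeff_lc_monom c\<^sub>0_def)
    ultimately show ?thesis by simp
  qed
  define g where "g c = (SOME n. n \<in> G \<and> z c \<in> S n)" for c
  have g: "g c \<in> G \<and> z c \<in> S (g c)" if "c \<in> {0<..<c\<^sub>0}" for c
    unfolding g_def by (rule someI_ex) (use cover z_in[OF that] in blast)
  have "inj_on g {0<..<c\<^sub>0}"
  proof (rule inj_onI)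
    fix c c' assume c: "c \<in> {0<..<c\<^sub>0}" and c': "c' \<in> {0<..<c\<^sub>0}" and "g c = g c'"
    with g[OF c] g[OF c'] have "z c \<in> S (g c)" and "z c' \<in> S (g c)" and "g c \<in> G"
      by simp_all
    moreover from \<open>g c \<in> G\<close> have "vanishes_upto p (lc_length (S (g c)))"
      using \<open>p \<le> q\<close> small by (blast intro: vanishes_upto_mono)
    ultimately show "c = c'"
      unfolding z_def using ints by (blast intro: lc_monom_eq_of_mem_interval)
  qed
  then have "countable {0<..<c\<^sub>0}"
    unfolding countable_def by blast
  with \<open>0 < c\<^sub>0\<close> show False
    using uncountable_open_interval by blast
qed

definition gaps_vanish :: "rat \<Rightarrow> (nat \<Rightarrow> lc set) \<Rightarrow> nat set \<Rightarrow> lc \<Rightarrow> lc \<Rightarrow> bool" where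
  "gaps_vanish q S F u v \<longleftrightarrow> (\<forall>x y. u \<le> x \<longrightarrow> x < y \<longrightarrow> y \<le> v \<longrightarrow>
     {x<..<y} \<inter> (\<Union>n\<in>F. S n) = {} \<longrightarrow> vanishes_upto q (y - x))"

lemma gaps_vanish_remove:
  assumes "gaps_vanish q S F u v" and "S k \<subseteq> {..c}" and "u \<le> c"
  shows "gaps_vanish q S (F - {k}) c v"
  unfolding gaps_vanish_def
proof (intro allI impI)
  fix x y assume "c \<le> x" and "x < y" and "y \<le> v" and gap: "{x<..<y} \<inter> (\<Union>n\<in>F - {k}. S n) = {}"
  have "{x<..<y} \<inter> S k = {}"
    using assms(2) \<open>c \<le> x\<close> by fastforce
  with gap have "{x<..<y} \<inter> (\<Union>n\<in>F. S n) = {}"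
    by blast
  moreover have "u \<le> x"
    using assms(3) \<open>c \<le> x\<close> by (rule order_trans)
  ultimately show "vanishes_upto q (y - x)"
    using assms(1) \<open>x < y\<close> \<open>y \<le> v\<close> unfolding gaps_vanish_def by blast
qed

lemma gap_end_exists:
  fixes a b :: "nat \<Rightarrow> lc"
  assumes "finite F" and "u \<le> v" and "\<And>n. a n < b n" and ends: "\<And>n. S n \<subseteq> {a n..b n}"
  obtains m where "u \<le> m" and "m \<le> v" and "{u<..<m} \<inter> (\<Union>n\<in>F. S n) = {}"
    and "m = v \<or> (\<exists>k\<in>F. a k \<le> m \<and> m < b k)"
proof (cases "\<exists>k\<in>F. a k \<le> u \<and> u < b k")
  case True
  then show thesis
    using that[of u] \<open>u \<le> v\<close> by auto
next
  case False
  define A where "A = insert v {a n | n. n \<in> F \<and> u < a n}"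
  define m where "m = Min A"
  have "finite A"
    unfolding A_def using \<open>finite F\<close> by simp
  moreover have "A \<noteq> {}"
    unfolding A_def by simp
  ultimately have "m \<in> A"
    unfolding m_def by (rule Min_in)
  have m_le: "m \<le> x" if "x \<in> A" for x
    unfolding m_def using \<open>finite A\<close> that by (rule Min_le)
  have "u \<le> m"
    using \<open>m \<in> A\<close> \<open>u \<le> v\<close> unfolding A_def by (auto intro: less_imp_le)
  moreover have "m \<le> v"
    using m_le by (simp add: A_def)
  moreover have "z \<notin> S n" if "u < z" and "z < m" and "n \<in> F" for z n
  proof
    assume "z \<in> S n"
    then have "z \<in> {a n..b n}"
      using ends by blast
    show False
    proof (cases "a n \<le> u")
      case True
      with False \<open>n \<in> F\<close> have "b n \<le> u"
        by (meson not_le)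
      with \<open>z \<in> {a n..b n}\<close> \<open>u < z\<close> show False
        by (meson atLeastAtMost_iff leD order_trans)
    next
      case False
      with \<open>n \<in> F\<close> have "a n \<in> A"
        unfolding A_def by auto
      then have "m \<le> a n"
        by (rule m_le)
      with \<open>z \<in> {a n..b n}\<close> \<open>z < m\<close> show False
        by (meson atLeastAtMost_iff leD order_trans)
    qed
  qed
  then have "{u<..<m} \<inter> (\<Union>n\<in>F. S n) = {}"
    by auto
  moreover have "m = v \<or> (\<exists>k\<in>F. a k \<le> m \<and> m < b k)"
    using \<open>m \<in> A\<close> assms(3) unfolding A_def by auto
  ultimately show thesis
    using that by blast
qed

text \<open>Sweep \<open>[u, v]\<close> from the left: cross a gap, then jump to the right end of an interval of \<open>F\<close>
  containing the current point and continue with that interval removed.\<close>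
lemma sum_lengths_bound_of_gaps_vanish:
  fixes S :: "nat \<Rightarrow> lc set" and a b :: "nat \<Rightarrow> lc"
  assumes ends: "\<And>n. a n < b n" "\<And>n. lc_length (S n) = b n - a n" "\<And>n. S n \<subseteq> {a n..b n}"
  shows "finite F \<Longrightarrow> gaps_vanish q S F u v \<Longrightarrow>
    \<exists>w. vanishes_upto q w \<and> v - u \<le> (\<Sum>n\<in>F. lc_length (S n)) + w"
proof (induction F arbitrary: u rule: finite_psubset_induct)
  case (psubset F)
  have nonneg: "0 \<le> (\<Sum>n\<in>G. lc_length (S n))" for G
    using ends(1,2) by (intro sum_nonneg) (simp add: less_imp_le)
  show ?case
  proof (cases "u < v")
    case False
    then have "v - u \<le> (\<Sum>n\<in>F. lc_length (S n)) + 0"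
      using nonneg[of F] by (simp add: order_trans[of _ 0])
    then show ?thesis
      using vanishes_upto_zero by blast
  next
    case True
    then obtain m where m: "u \<le> m" "m \<le> v" "{u<..<m} \<inter> (\<Union>n\<in>F. S n) = {}"
      and next_start: "m = v \<or> (\<exists>k\<in>F. a k \<le> m \<and> m < b k)"
      using gap_end_exists[of F u v a b S] psubset.hyps ends(1,3) by (metis less_imp_le)
    have small: "vanishes_upto q (m - u)"
      using psubset.prems m unfolding gaps_vanish_def by (cases "u < m") auto
    from next_start show ?thesis
    proof
      assume "m = v"
      then have "v - u \<le> (\<Sum>n\<in>F. lc_length (S n)) + (m - u)"
        using nonneg[of F] by simp
      with small show ?thesis
        by blast
    next
      assume "\<exists>k\<in>F. a k \<le> m \<and> m < b k"
      then obtain k where "k \<in> F" and "a k \<le> m" and "m < b k"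
        by blast
      have "S k \<subseteq> {..b k}"
        using ends(3)[of k] by auto
      then have "gaps_vanish q S (F - {k}) (b k) v"
        using psubset.prems \<open>u \<le> m\<close> \<open>m < b k\<close> by (intro gaps_vanish_remove) auto
      moreover have "F - {k} \<subset> F"
        using \<open>k \<in> F\<close> by blast
      ultimately obtain w where w: "vanishes_upto q w" "v - b k \<le> (\<Sum>n\<in>F - {k}. lc_length (S n)) + w"
        using psubset.IH by blast
      have "v - u = (v - b k) + (b k - m) + (m - u)"
        by simp
      also have "\<dots> \<le> ((\<Sum>n\<in>F - {k}. lc_length (S n)) + w) + lc_length (S k) + (m - u)"
        using w(2) \<open>a k \<le> m\<close> ends(2) by (intro add_mono) (simp_all add: diff_mono)
      also have "\<dots> = (\<Sum>n\<in>F. lc_length (S n)) + (w + (m - u))"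
        using psubset.hyps \<open>k \<in> F\<close> by (simp add: sum.remove algebra_simps)
      finally show ?thesis
        using vanishes_upto_add[OF w(1) small] by blast
    qed
  qed
qed

lemma gaps_vanish_of_cover:
  fixes S :: "nat \<Rightarrow> lc set"
  assumes cover: "{u<..<v} \<subseteq> (\<Union>n. S n)" and ints: "\<And>n. lc_is_interval (S n)"
  shows "gaps_vanish q S {n. \<not> vanishes_upto q (lc_length (S n))} u v"
  unfolding gaps_vanish_def
proof (intro allI impI)
  fix x y
  assume "u \<le> x" "x < y" "y \<le> v"
    and gap: "{x<..<y} \<inter> (\<Union>n\<in>{n. \<not> vanishes_upto q (lc_length (S n))}. S n) = {}"
  have "{x<..<y} \<subseteq> {u<..<v}"
    using \<open>u \<le> x\<close> \<open>y \<le> v\<close> by (meson greaterThanLessThan_iff le_less_trans less_le_trans subsetI)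
  have "{x<..<y} \<subseteq> (\<Union>n\<in>{n. vanishes_upto q (lc_length (S n))}. S n)"
  proof
    fix z assume z: "z \<in> {x<..<y}"
    then obtain n where "z \<in> S n"
      using \<open>{x<..<y} \<subseteq> {u<..<v}\<close> cover by blast
    moreover from this have "vanishes_upto q (lc_length (S n))"
      using gap z by blast
    ultimately show "z \<in> (\<Union>n\<in>{n. vanishes_upto q (lc_length (S n))}. S n)"
      by blast
  qed
  then show "vanishes_upto q (y - x)"
    using \<open>x < y\<close> ints by (rule vanishes_upto_of_cover) simp
qed

lemma lc_length_le_cover_sum:
  assumes I: "lc_is_interval I" and cov: "lc_cover S I" and s: "lc_sums (\<lambda>n. lc_length (S n)) s"
  shows "lc_length I \<le> s"
proof (rule ccontr)
  assume "\<not> lc_length I \<le> s"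
  then have d: "0 < lc_length I - s" by simp
  define q where "q = lead_exp (lc_length I - s)"
  define F where "F = {n. \<not> vanishes_upto q (lc_length (S n))}"
  obtain u v where length_I: "lc_length I = v - u" and "interval_ends u v I"
    using I by (rule lc_is_interval_ends)
  have "{u<..<v} \<subseteq> (\<Union>n. S n)" and ints: "\<And>n. lc_is_interval (S n)"
    using cov \<open>interval_ends u v I\<close> unfolding lc_cover_def interval_ends_def by auto
  then have gaps: "gaps_vanish q S F u v"
    unfolding F_def by (rule gaps_vanish_of_cover)
  obtain N where "\<forall>n\<ge>N. vanishes_upto q (lc_length (S n))"
    using lc_sums_imp_null[OF s] unfolding lc_null_def eventually_sequentially by blast
  then have F_N: "F \<subseteq> {..<N}"
    unfolding F_def by (auto simp: not_less[symmetric])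
  then have "finite F"
    by (rule finite_subset) simp
  obtain a b where "\<And>n. a n < b n" and "\<And>n. lc_length (S n) = b n - a n"
    and "\<And>n. S n \<subseteq> {a n..b n}"
    using lc_intervals_ends[of S] ints by blast
  then have "\<exists>w. vanishes_upto q w \<and> v - u \<le> (\<Sum>n\<in>F. lc_length (S n)) + w"
    using \<open>finite F\<close> gaps by (rule sum_lengths_bound_of_gaps_vanish)
  then obtain w where w: "vanishes_upto q w" and "v - u \<le> (\<Sum>n\<in>F. lc_length (S n)) + w"
    by blast
  have nonneg: "0 \<le> lc_length (S n)" for n
    using cov by (rule lc_cover_length_nonneg)
  have "(\<Sum>n\<in>F. lc_length (S n)) \<le> (\<Sum>n<N. lc_length (S n))"
    using F_N nonneg by (intro sum_mono2) auto
  also have "\<dots> \<le> s"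
    using s nonneg by (rule sum_le_lc_sums)
  finally have "lc_length I \<le> s + w"
    using \<open>v - u \<le> _\<close> unfolding length_I by (meson add_right_mono order_trans)
  then have "lc_length I - s \<le> w"
    by (simp add: algebra_simps)
  moreover have "w < lc_length I - s"
    using d w unfolding q_def by (rule vanishes_upto_lead_exp_less)
  ultimately show False by simp
qed

lemma outer_measure_interval:
  assumes "lc_is_interval I"
  shows "outer_measurable I \<and> outer_measure I = lc_length I"
proof (rule outer_measure_eqI)
  fix t assume "t \<in> cover_sums I"
  then show "lc_length I \<le> t"
    using assms lc_length_le_cover_sum by (metis cover_sumsE)
next
  fix e :: lc assume "0 < e"
  then obtain s where s: "lc_sums (slack e) s" and "s < e"
    by (rule slack_sums_less)
  define S where "S n = (if n = 0 then I else {0..slack e (n - 1)})" for n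
  have length_S: "lc_length (S (Suc n)) = slack e n" for n
    unfolding S_def by (simp add: lc_length_atLeastAtMost slack_pos)
  have sums: "lc_sums (\<lambda>n. lc_length (S n)) (lc_length I + s)"
    using lc_sums_Suc[of "\<lambda>n. lc_length (S n)"] s unfolding length_S by (simp add: S_def)
  have "lc_cover S I"
    unfolding lc_cover_def
    using assms sums by (auto simp: S_def lc_is_interval_atLeastAtMost slack_pos)
  with sums have "lc_length I + s \<in> cover_sums I"
    by (intro cover_sumsI)
  moreover have "lc_length I + s < lc_length I + e"
    using \<open>s < e\<close> by simp
  ultimately show "\<exists>t\<in>cover_sums I. t < lc_length I + e" ..
qed

lemma outer_measure_empty: "outer_measurable {} \<and> outer_measure {} = 0"
proof (rule outer_measure_eqI)
  fix e :: lc assume "0 < e"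
  then obtain s where s: "lc_sums (slack e) s" and "s < e"
    by (rule slack_sums_less)
  have "(\<lambda>k. lc_length {0..slack e k}) = slack e"
    by (simp add: lc_length_atLeastAtMost slack_pos)
  with s have sums: "lc_sums (\<lambda>k. lc_length {0..slack e k}) s"
    by simp
  moreover from sums have "lc_cover (\<lambda>k. {0..slack e k}) {}"
    unfolding lc_cover_def by (auto simp: lc_is_interval_atLeastAtMost slack_pos)
  ultimately have "s \<in> cover_sums {}"
    by (intro cover_sumsI)
  with \<open>s < e\<close> show "\<exists>t\<in>cover_sums {}. t < 0 + e"
    by auto
qed (rule cover_sums_nonneg)

section \<open>Countable subadditivity\<close>

lemma cover_sums_UN_less:
  assumes om: "\<And>k. outer_measurable (Y k)" and null: "lc_null (\<lambda>k. outer_measure (Y k))"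
    and bound: "\<And>K. (\<Sum>k<K. outer_measure (Y k)) \<le> \<sigma>" and "0 < e"
  shows "\<exists>u\<in>cover_sums (\<Union>k. Y k). u < \<sigma> + e"
proof -
  obtain s where s: "lc_sums (slack e) s" and "s < e"
    using \<open>0 < e\<close> by (rule slack_sums_less)
  have "\<forall>k. \<exists>t\<in>cover_sums (Y k). t < outer_measure (Y k) + slack e k"
    using outer_measure_approx[OF om slack_pos] by blast
  then obtain t where t: "\<And>k. t k \<in> cover_sums (Y k)" "\<And>k. t k < outer_measure (Y k) + slack e k"
    by metis
  have "\<forall>k. \<exists>S. lc_cover S (Y k) \<and> lc_sums (\<lambda>i. lc_length (S i)) (t k)"
    using t(1) by (metis cover_sumsE)
  then obtain S where S: "\<And>k. lc_cover (S k) (Y k)" "\<And>k. lc_sums (\<lambda>i. lc_length (S k i)) (t k)"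
    by metis
  have t_le: "t k \<le> outer_measure (Y k) + slack e k" for k
    using t(2) by (rule less_imp_le)
  have "lc_null t"
    using cover_sums_nonneg[OF t(1)] t_le
  proof (rule lc_null_le)
    show "lc_null (\<lambda>k. outer_measure (Y k) + slack e k)"
      using null lc_null_slack by (rule lc_null_add)
  qed
  moreover have "(\<Sum>k<K. t k) \<le> \<sigma> + s" for K
  proof -
    have "(\<Sum>k<K. t k) \<le> (\<Sum>k<K. outer_measure (Y k)) + (\<Sum>k<K. slack e k)"
      unfolding sum.distrib[symmetric] using t_le by (rule sum_mono)
    also have "\<dots> \<le> \<sigma> + s"
      using bound sum_le_lc_sums[OF s less_imp_le[OF slack_pos]] by (rule add_mono)
    finally show ?thesis .
  qed
  ultimately obtain u where "u \<in> cover_sums (\<Union>k. Y k)" and "u \<le> \<sigma> + s"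
    using lc_cover_UN[of S Y t, OF S] by blast
  moreover have "\<sigma> + s < \<sigma> + e"
    using \<open>s < e\<close> by simp
  ultimately show ?thesis
    by (meson le_less_trans)
qed

lemma outer_measure_UN_le:
  assumes om: "\<And>k. outer_measurable (Y k)" and sums: "lc_sums (\<lambda>k. outer_measure (Y k)) \<sigma>"
    and "outer_measurable A" and "A \<subseteq> (\<Union>k. Y k)"
  shows "outer_measure A \<le> \<sigma>"
proof (rule lc_le_of_forall_pos)
  fix e :: lc assume "0 < e"
  have "(\<Sum>k<K. outer_measure (Y k)) \<le> \<sigma>" for K
    using sums outer_measure_nonneg[OF om] by (rule sum_le_lc_sums)
  then obtain u where "u \<in> cover_sums (\<Union>k. Y k)" and "u < \<sigma> + e"
    using cover_sums_UN_less[OF om lc_sums_imp_null[OF sums] _ \<open>0 < e\<close>] by blast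
  with assms(3,4) show "outer_measure A \<le> \<sigma> + e"
    using outer_measure_le cover_sums_antimono by (meson less_imp_le order_trans subsetD)
qed

lemma cover_sums_tail_less:
  assumes om: "\<And>k. outer_measurable (Y k)" and null: "lc_null (\<lambda>k. outer_measure (Y k))"
    and "0 < e"
  shows "\<exists>K. \<exists>u\<in>cover_sums (\<Union>k\<in>{K..}. Y k). u < e"
proof -
  obtain d where "0 < d" and "d + d < e"
    using \<open>0 < e\<close> by (rule lc_pos_split2)
  obtain K where K: "\<forall>k\<ge>K. vanishes_upto (lead_exp d) (outer_measure (Y k))"
    using null unfolding lc_null_def eventually_sequentially by blast
  have "vanishes_upto (lead_exp d) (\<Sum>k<J. outer_measure (Y (k + K)))" for J
    using K by (intro vanishes_upto_sum) simp
  then have "(\<Sum>k<J. outer_measure (Y (k + K))) \<le> d" for J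
    using vanishes_upto_lead_exp_less[OF \<open>0 < d\<close>] less_imp_le by blast
  moreover have "lc_null (\<lambda>k. outer_measure (Y (k + K)))"
    using null unfolding lc_null_shift_iff[of "\<lambda>k. outer_measure (Y k)"] .
  ultimately obtain u where u: "u \<in> cover_sums (\<Union>k. Y (k + K))" and "u < d + d"
    using cover_sums_UN_less[of "\<lambda>k. Y (k + K)"] om \<open>0 < d\<close> by blast
  have "(\<Union>k\<in>{K..}. Y k) \<subseteq> (\<Union>k. Y (k + K))"
  proof
    fix x assume "x \<in> (\<Union>k\<in>{K..}. Y k)"
    then obtain k where "K \<le> k" and "x \<in> Y k"
      by auto
    then have "x \<in> Y ((k - K) + K)"
      by simp
    then show "x \<in> (\<Union>k. Y (k + K))"
      by blast
  qed
  with u have "u \<in> cover_sums (\<Union>k\<in>{K..}. Y k)"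
    using cover_sums_antimono by blast
  moreover have "u < e"
    using \<open>u < d + d\<close> \<open>d + d < e\<close> by (rule less_trans)
  ultimately show ?thesis
    by blast
qed

lemma L_measurableD:
  assumes "L_measurable A" and "outer_measurable B"
  shows "outer_measurable (A \<inter> B)" and "outer_measurable (- A \<inter> B)"
    and "outer_measure B = outer_measure (A \<inter> B) + outer_measure (- A \<inter> B)"
  using assms unfolding L_measurable_def by blast+

lemma L_measurable_imp_outer_measurable: "L_measurable A \<Longrightarrow> outer_measurable A"
  unfolding L_measurable_def by blast

lemma L_measurable_empty: "L_measurable {}"
  unfolding L_measurable_def using outer_measure_empty by simp

lemma L_measurable_cover_sum_ge:
  assumes A: "L_measurable A" and B: "L_measurable B"
    and cov: "lc_cover S (A \<union> B)" and sums: "lc_sums (\<lambda>n. lc_length (S n)) t"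
  shows "outer_measure A + outer_measure (- A \<inter> B) \<le> t"
proof -
  have om_S: "outer_measurable (S n)" and length_S: "outer_measure (S n) = lc_length (S n)" for n
    using cov outer_measure_interval unfolding lc_cover_def by blast+
  define Y where "Y n = A \<inter> S n" for n
  define Z where "Z n = B \<inter> (- A \<inter> S n)" for n
  have om_Y: "outer_measurable (Y n)" and om_AS: "outer_measurable (- A \<inter> S n)" for n
    unfolding Y_def using L_measurableD[OF A om_S] by blast+
  have om_Z: "outer_measurable (Z n)" for n
    unfolding Z_def using L_measurableD(1)[OF B om_AS] .
  have "outer_measure (Y n) + outer_measure (Z n) \<le> lc_length (S n)" for n
  proof -
    have "outer_measure (Z n) \<le> outer_measure (- A \<inter> S n)"
      using om_Z om_AS by (rule outer_measure_mono) (auto simp: Z_def)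
    then show ?thesis
      using L_measurableD(3)[OF A om_S] length_S unfolding Y_def by (simp add: add_left_mono)
  qed
  with sums obtain s\<^sub>Y s\<^sub>Z where s\<^sub>Y: "lc_sums (\<lambda>n. outer_measure (Y n)) s\<^sub>Y"
    and s\<^sub>Z: "lc_sums (\<lambda>n. outer_measure (Z n)) s\<^sub>Z" and "s\<^sub>Y + s\<^sub>Z \<le> t"
    using lc_sums_split_bound[of "\<lambda>n. outer_measure (Y n)" "\<lambda>n. outer_measure (Z n)"]
      om_Y om_Z outer_measure_nonneg by metis
  have "A \<subseteq> (\<Union>n. Y n)" and "- A \<inter> B \<subseteq> (\<Union>n. Z n)"
    using cov unfolding lc_cover_def Y_def Z_def by blast+
  then have "outer_measure A \<le> s\<^sub>Y" and "outer_measure (- A \<inter> B) \<le> s\<^sub>Z"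
    using outer_measure_UN_le[OF om_Y s\<^sub>Y L_measurable_imp_outer_measurable[OF A]]
      outer_measure_UN_le[OF om_Z s\<^sub>Z L_measurableD(2)[OF A L_measurable_imp_outer_measurable[OF B]]]
    by blast+
  with \<open>s\<^sub>Y + s\<^sub>Z \<le> t\<close> show ?thesis
    by (meson add_mono order_trans)
qed

lemma outer_measure_Un_L_measurable:
  assumes A: "L_measurable A" and B: "L_measurable B"
  shows "outer_measurable (A \<union> B) \<and>
    outer_measure (A \<union> B) = outer_measure A + outer_measure (- A \<inter> B)"
proof (rule outer_measure_eqI)
  fix t assume "t \<in> cover_sums (A \<union> B)"
  then show "outer_measure A + outer_measure (- A \<inter> B) \<le> t"
    using L_measurable_cover_sum_ge[OF A B] by (metis cover_sumsE)
next
  fix e :: lc assume "0 < e"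
  have "A \<union> (- A \<inter> B) = A \<union> B"
    by blast
  then show "\<exists>t\<in>cover_sums (A \<union> B). t < outer_measure A + outer_measure (- A \<inter> B) + e"
    using cover_sums_Un_less[OF _ _ \<open>0 < e\<close>] L_measurableD(2)[OF A] L_measurable_imp_outer_measurable[OF A]
      L_measurable_imp_outer_measurable[OF B] by metis
qed

lemma L_measurable_Un:
  assumes A: "L_measurable A" and B: "L_measurable B"
  shows "L_measurable (A \<union> B)"
  unfolding L_measurable_def
proof (intro conjI allI impI)
  show "outer_measurable (A \<union> B)"
    using outer_measure_Un_L_measurable[OF A B] by blast
  fix C assume C: "outer_measurable C"
  note split_C = L_measurableD[OF A C]
  note split_AC = L_measurableD[OF B split_C(2)]
  have compl: "- (A \<union> B) \<inter> C = - B \<inter> (- A \<inter> C)"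
    by blast
  have "outer_measurable ((A \<union> B) \<inter> C) \<and>
      outer_measure ((A \<union> B) \<inter> C) = outer_measure C - outer_measure (- (A \<union> B) \<inter> C)"
  proof (rule outer_measure_diff_eqI[OF C])
    show "outer_measurable (- (A \<union> B) \<inter> C)"
      unfolding compl by (fact split_AC(2))
    show "C \<subseteq> ((A \<union> B) \<inter> C) \<union> (- (A \<union> B) \<inter> C)"
      by blast
    fix e :: lc assume "0 < e"
    have "(A \<inter> C) \<union> (B \<inter> (- A \<inter> C)) = (A \<union> B) \<inter> C"
      by blast
    moreover have "outer_measure (A \<inter> C) + outer_measure (B \<inter> (- A \<inter> C)) =
        outer_measure C - outer_measure (- (A \<union> B) \<inter> C)"
      unfolding compl using split_C(3) split_AC(3) by (simp add: algebra_simps)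
    ultimately show "\<exists>t\<in>cover_sums ((A \<union> B) \<inter> C). t < outer_measure C - outer_measure (- (A \<union> B) \<inter> C) + e"
      using cover_sums_Un_less[OF split_C(1) split_AC(1) \<open>0 < e\<close>] by simp
  qed
  then show "outer_measurable ((A \<union> B) \<inter> C)" and "outer_measurable (- (A \<union> B) \<inter> C)"
    and "outer_measure C = outer_measure ((A \<union> B) \<inter> C) + outer_measure (- (A \<union> B) \<inter> C)"
    using split_AC(2) unfolding compl by (auto simp: algebra_simps)
qed

lemma L_measurable_UN_finite:
  assumes "finite I" and "\<And>i. i \<in> I \<Longrightarrow> L_measurable (A i)"
  shows "L_measurable (\<Union>i\<in>I. A i)"
  using assms by (induction I rule: finite_induct) (simp_all add: L_measurable_empty L_measurable_Un)

section \<open>Increasing unions\<close>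

lemma UN_UN_atLeastAtMost: "(\<Union>N. \<Union>n\<in>{m..N}. A n) = (\<Union>n\<in>{m::nat..}. A n)"
proof
  show "(\<Union>n\<in>{m..}. A n) \<subseteq> (\<Union>N. \<Union>n\<in>{m..N}. A n)"
  proof
    fix x assume "x \<in> (\<Union>n\<in>{m..}. A n)"
    then obtain n where "n \<in> {m..n}" and "x \<in> A n"
      by auto
    then have "x \<in> (\<Union>n\<in>{m..n}. A n)"
      by (rule UN_I)
    then show "x \<in> (\<Union>N. \<Union>n\<in>{m..N}. A n)"
      by (rule UN_I[OF UNIV_I])
  qed
qed auto

lemma incseq_UN_diff_subset:
  fixes U :: "nat \<Rightarrow> 'a set"
  assumes "incseq U"
  shows "(\<Union>n. U n) - U N \<subseteq> (\<Union>k\<in>{N..}. U (Suc k) - U k)"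
proof
  fix x assume x: "x \<in> (\<Union>n. U n) - U N"
  then have ex: "\<exists>j. x \<in> U j"
    by blast
  define j where "j = (LEAST j. x \<in> U j)"
  have "x \<in> U j"
    unfolding j_def using ex by (rule LeastI_ex)
  moreover have "N < j"
  proof (rule ccontr)
    assume "\<not> N < j"
    then have "U j \<subseteq> U N"
      using assms by (simp add: incseq_def)
    with x \<open>x \<in> U j\<close> show False
      by blast
  qed
  then obtain k where "j = Suc k"
    by (cases j) auto
  with \<open>N < j\<close> have "N \<le> k"
    by simp
  moreover have "x \<notin> U k"
    using not_less_Least[of k "\<lambda>j. x \<in> U j"] unfolding j_def[symmetric] \<open>j = Suc k\<close> by simp
  ultimately show "x \<in> (\<Union>k\<in>{N..}. U (Suc k) - U k)"
    using \<open>j = Suc k\<close> by auto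
qed

lemma outer_measure_eq_limit:
  assumes om: "\<And>N. outer_measurable (X N)" and sub: "\<And>N. X N \<subseteq> A"
    and lim: "lc_tendsto (\<lambda>N. outer_measure (X N)) l"
    and tails: "\<And>e. 0 < e \<Longrightarrow> \<exists>K. \<forall>N\<ge>K. \<exists>u\<in>cover_sums (A - X N). u < e"
  shows "outer_measurable A \<and> outer_measure A = l"
proof (rule outer_measure_eqI)
  fix t assume "t \<in> cover_sums A"
  then have "\<forall>N. outer_measure (X N) \<le> t"
    using om sub outer_measure_le cover_sums_antimono by blast
  with lim show "l \<le> t"
    by (intro lc_tendsto_le[OF lim] always_eventually)
next
  fix e :: lc assume "0 < e"
  obtain d where "0 < d" and "d + d + d < e"
    using \<open>0 < e\<close> by (rule lc_pos_split3)
  obtain K where K: "\<forall>N\<ge>K. \<exists>u\<in>cover_sums (A - X N). u < d"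
    using tails[OF \<open>0 < d\<close>] by blast
  have "\<forall>\<^sub>F N in sequentially. vanishes_upto (lead_exp d) (outer_measure (X N) - l) \<and> K \<le> N"
    using lim unfolding lc_tendsto_iff_null lc_null_def by (auto intro: eventually_conj eventually_ge_at_top)
  then obtain N where "vanishes_upto (lead_exp d) (outer_measure (X N) - l)" and "K \<le> N"
    using eventually_happens'[OF sequentially_bot] by blast
  then have close: "outer_measure (X N) - l < d" and "\<exists>u\<in>cover_sums (A - X N). u < d"
    using vanishes_upto_lead_exp_less[OF \<open>0 < d\<close>] K by blast+
  then obtain u where "u \<in> cover_sums (A - X N)" and u: "u < d"
    by blast
  then obtain w where w: "w \<in> cover_sums ((A - X N) \<union> X N)" and "w < u + outer_measure (X N) + d"
    using cover_sums_Un_approx[OF _ om \<open>0 < d\<close>] by blast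
  have "w \<in> cover_sums A"
    using w cover_sums_antimono[of A "(A - X N) \<union> X N"] by blast
  moreover have "w < l + e"
  proof -
    have "w < u + outer_measure (X N) + d"
      by fact
    also have "\<dots> < d + (d + l) + d"
      using add_strict_right_mono[OF add_strict_mono[OF u close[unfolded diff_less_eq]], of d] .
    also have "\<dots> = l + (d + d + d)"
      by (simp add: algebra_simps)
    also have "\<dots> < l + e"
      using \<open>d + d + d < e\<close> by simp
    finally show ?thesis .
  qed
  ultimately show "\<exists>t\<in>cover_sums A. t < l + e"
    by blast
qed

context
  fixes U :: "nat \<Rightarrow> lc set" and L :: lc
  assumes meas: "\<And>N. L_measurable (U N)" and inc: "incseq U"
    and lim: "lc_tendsto (\<lambda>N. outer_measure (U N)) L"
begin

lemma incseq_outer_measure_Int_diff: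
  assumes om: "outer_measurable (U (Suc n) \<inter> B)"
  shows "outer_measurable ((U (Suc n) - U n) \<inter> B)"
    and "outer_measure ((U (Suc n) - U n) \<inter> B) = outer_measure (U (Suc n) \<inter> B) - outer_measure (U n \<inter> B)"
proof -
  have "(U (Suc n) - U n) \<inter> B = - U n \<inter> (U (Suc n) \<inter> B)"
    and "U n \<inter> (U (Suc n) \<inter> B) = U n \<inter> B"
    using inc by (auto simp: incseq_Suc_iff)
  then show "outer_measurable ((U (Suc n) - U n) \<inter> B)"
    and "outer_measure ((U (Suc n) - U n) \<inter> B) = outer_measure (U (Suc n) \<inter> B) - outer_measure (U n \<inter> B)"
    using L_measurableD[OF meas om, of n] by simp_all
qed

lemma incseq_outer_measure_diff:
  shows "outer_measurable (U (Suc n) - U n)"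
    and "outer_measure (U (Suc n) - U n) = outer_measure (U (Suc n)) - outer_measure (U n)"
  using incseq_outer_measure_Int_diff[of n UNIV] L_measurable_imp_outer_measurable[OF meas] by simp_all

lemma incseq_increments_null: "lc_null (\<lambda>n. outer_measure (U (Suc n) - U n))"
proof -
  have null: "lc_null (\<lambda>n. outer_measure (U n) - L)"
    using lim unfolding lc_tendsto_iff_null .
  have "lc_null (\<lambda>n. (outer_measure (U (n + 1)) - L) - (outer_measure (U n) - L))"
    using lc_null_shift_iff[of "\<lambda>n. outer_measure (U n) - L" 1, THEN iffD2, OF null] null
    by (rule lc_null_diff)
  then show ?thesis
    using incseq_outer_measure_diff(2) by simp
qed

lemma incseq_tails_small:
  assumes "0 < e"
  shows "\<exists>K. \<forall>N\<ge>K. \<exists>u\<in>cover_sums ((\<Union>n. U n) - U N). u < e"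
proof -
  obtain K u where "u \<in> cover_sums (\<Union>k\<in>{K..}. U (Suc k) - U k)" and "u < e"
    using cover_sums_tail_less[of "\<lambda>n. U (Suc n) - U n"] incseq_outer_measure_diff(1)
      incseq_increments_null \<open>0 < e\<close> by blast
  moreover have "(\<Union>n. U n) - U N \<subseteq> (\<Union>k\<in>{K..}. U (Suc k) - U k)" if "K \<le> N" for N
    using incseq_UN_diff_subset[OF inc, of N] that by fastforce
  ultimately show ?thesis
    using cover_sums_antimono by (meson subsetD)
qed

lemma incseq_outer_measure_Int_UN:
  assumes "outer_measurable B"
  obtains l where "lc_tendsto (\<lambda>N. outer_measure (U N \<inter> B)) l"
    and "outer_measurable ((\<Union>n. U n) \<inter> B)" and "outer_measure ((\<Union>n. U n) \<inter> B) = l"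
proof -
  have om: "outer_measurable (U N \<inter> B)" for N
    using L_measurableD(1)[OF meas assms] .
  note diff = incseq_outer_measure_Int_diff[OF om]
  have "lc_null (\<lambda>n. outer_measure ((U (Suc n) - U n) \<inter> B))"
  proof (rule lc_null_le[OF _ _ incseq_increments_null])
    show "0 \<le> outer_measure ((U (Suc n) - U n) \<inter> B)" for n
      using diff(1) by (rule outer_measure_nonneg)
    show "outer_measure ((U (Suc n) - U n) \<inter> B) \<le> outer_measure (U (Suc n) - U n)" for n
      using diff(1) incseq_outer_measure_diff(1) by (rule outer_measure_mono) auto
  qed
  then obtain l where l: "lc_tendsto (\<lambda>N. outer_measure (U N \<inter> B)) l"
    using lc_tendsto_of_null_increments[of "\<lambda>N. outer_measure (U N \<inter> B)"] diff(2) by auto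
  moreover have "outer_measurable ((\<Union>n. U n) \<inter> B) \<and> outer_measure ((\<Union>n. U n) \<inter> B) = l"
  proof (rule outer_measure_eq_limit[OF om _ l])
    show "U N \<inter> B \<subseteq> (\<Union>n. U n) \<inter> B" for N
      by blast
    fix e :: lc assume "0 < e"
    have "(\<Union>n. U n) \<inter> B - U N \<inter> B \<subseteq> (\<Union>n. U n) - U N" for N
      by blast
    then show "\<exists>K. \<forall>N\<ge>K. \<exists>u\<in>cover_sums ((\<Union>n. U n) \<inter> B - U N \<inter> B). u < e"
      using incseq_tails_small[OF \<open>0 < e\<close>] cover_sums_antimono by (meson subsetD)
  qed
  ultimately show thesis
    using that by blast
qed

lemma incseq_outer_measure_compl_Int:
  assumes B: "outer_measurable B" and l: "lc_tendsto (\<lambda>N. outer_measure (U N \<inter> B)) l"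
    and om: "outer_measurable ((\<Union>n. U n) \<inter> B)" and M: "outer_measure ((\<Union>n. U n) \<inter> B) = l"
  shows "outer_measurable (- (\<Union>n. U n) \<inter> B) \<and>
    outer_measure (- (\<Union>n. U n) \<inter> B) = outer_measure B - outer_measure ((\<Union>n. U n) \<inter> B)"
proof (rule outer_measure_diff_eqI[OF B om])
  show "B \<subseteq> (- (\<Union>n. U n) \<inter> B) \<union> ((\<Union>n. U n) \<inter> B)"
    by blast
  fix e :: lc assume "0 < e"
  obtain d where "0 < d" and "d + d < e"
    using \<open>0 < e\<close> by (rule lc_pos_split2)
  obtain N where "vanishes_upto (lead_exp d) (outer_measure (U N \<inter> B) - l)"
    using l unfolding lc_tendsto_iff_null lc_null_def eventually_sequentially by blast
  then have close: "l - outer_measure (U N \<inter> B) < d"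
    using vanishes_upto_lead_exp_uminus_less[OF \<open>0 < d\<close>] by fastforce
  obtain t where t_cover: "t \<in> cover_sums (- U N \<inter> B)" and t: "t < outer_measure (- U N \<inter> B) + d"
    using outer_measure_approx[OF L_measurableD(2)[OF meas B] \<open>0 < d\<close>] by blast
  have "- (\<Union>n. U n) \<inter> B \<subseteq> - U N \<inter> B"
    by blast
  with t_cover have "t \<in> cover_sums (- (\<Union>n. U n) \<inter> B)"
    using cover_sums_antimono by blast
  moreover have "t < outer_measure B - l + e"
  proof -
    have "t < outer_measure B - outer_measure (U N \<inter> B) + d"
      using t L_measurableD(3)[OF meas B, of N] by (simp add: algebra_simps)
    also have "\<dots> = (outer_measure B - l) + (l - outer_measure (U N \<inter> B)) + d"
      by (simp add: algebra_simps)
    also have "\<dots> < (outer_measure B - l) + d + d"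
      using add_strict_right_mono[OF add_strict_left_mono[OF close, of "outer_measure B - l"], of d] .
    also have "\<dots> = (outer_measure B - l) + (d + d)"
      by (simp add: algebra_simps)
    also have "\<dots> < outer_measure B - l + e"
      using \<open>d + d < e\<close> by simp
    finally show ?thesis .
  qed
  ultimately show "\<exists>t\<in>cover_sums (- (\<Union>n. U n) \<inter> B). t < outer_measure B - outer_measure ((\<Union>n. U n) \<inter> B) + e"
    unfolding M by blast
qed

lemma L_measurable_incseq_UN: "L_measurable (\<Union>n. U n)"
  unfolding L_measurable_def
proof (intro conjI allI impI)
  show "outer_measurable (\<Union>n. U n)"
    using outer_measure_eq_limit[OF L_measurable_imp_outer_measurable[OF meas] _ lim incseq_tails_small]
    by blast
  fix B assume B: "outer_measurable B"
  obtain l where l: "lc_tendsto (\<lambda>N. outer_measure (U N \<inter> B)) l"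
    and om: "outer_measurable ((\<Union>n. U n) \<inter> B)" and M: "outer_measure ((\<Union>n. U n) \<inter> B) = l"
    using incseq_outer_measure_Int_UN[OF B] .
  with incseq_outer_measure_compl_Int[OF B l om M]
  show "outer_measurable ((\<Union>n. U n) \<inter> B)" and "outer_measurable (- (\<Union>n. U n) \<inter> B)"
    and "outer_measure B = outer_measure ((\<Union>n. U n) \<inter> B) + outer_measure (- (\<Union>n. U n) \<inter> B)"
    by simp_all
qed
end

theorem mainTheorem19:
  fixes A :: "nat \<Rightarrow> lc set"
  assumes "\<And>n. n \<ge> 1 \<Longrightarrow> L_measurable (A n)"
    and "\<exists>L. lc_tendsto (\<lambda>N. L_measure (\<Union>n\<in>{1..N}. A n)) L"
  shows "L_measurable (\<Union>n\<in>{1..}. A n)"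
proof -
  let ?U = "\<lambda>N. \<Union>n\<in>{1..N}. A n"
  have "L_measurable (?U N)" for N
    using assms(1) by (intro L_measurable_UN_finite) auto
  moreover have "incseq ?U"
    unfolding incseq_def by (intro allI impI UN_mono) auto
  moreover obtain L where "lc_tendsto (\<lambda>N. outer_measure (?U N)) L"
    using assms(2) unfolding L_measure_def by blast
  ultimately have "L_measurable (\<Union>N. ?U N)"
    by (rule L_measurable_incseq_UN)
  then show ?thesis
    unfolding UN_UN_atLeastAtMost .
qed

end
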